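(* (i) Let $\theta\in[0,2\pi]$. If $\lambda_\infty>\|V\|_\infty$, then for no $s\in(0,L]$ is $\lambda_\infty$ an eigenvalue of $H_{\theta,s}$; in particular $\Gamma_2$ has no crossings with $\operatorname{Train}(X\times X)$ and $B_2=0$ (for any $s_0\in(0,L)$). (ii) Let $\theta\in(0,2\pi)$. If $\lambda_\infty>\|V\|_\infty$ and $0<s_0<\frac12\min\{\theta,2\pi-\theta\}\,(\|V\|_\infty+\lambda_\infty)^{-1/2}$, then no $\lambda\in[0,\lambda_\infty]$ is an eigenvalue of $H_{\theta,s_0}$; in particular $\Gamma_1$ has no crossings and $B_1=0$.
   Context: $n\ge1$, $L>0$; $V:\mathbb{R}\to\mathbb{R}^{n\times n}$ symmetric, with real piecewise continuous $2L$-periodic entries; $\|V\|_\infty=\sup_{x\in[-L,L]}\|V(x)\|$. For $\theta\in[0,2\pi]$, $s\in(0,L]$, $H_{\theta,s}$ is $y\mapsto y''+V(x)y$ in $L^2([-s,s];\mathbb{C}^n)$ with domain $\{y: y,y'\in AC,\ y''\in L^2,\ y(s)=e^{i\theta}y(-s),\ y'(s)=e^{i\theta}y'(-s)\}$. Notation: $\otimes$ Kronecker product, $\oplus$ block-diagonal sum, $J=\begin{pmatrix}0&1\\-1&0\end{pmatrix}$. $A(x,\lambda)=\begin{pmatrix}0_{2n}&I_{2n}\\ \lambda I_{2n}-V(x)\otimes I_2&0_{2n}\end{pmatrix}$, $\mathfrak{u}(s,\theta)=\begin{pmatrix}0&-\theta/(2s)\\ \theta/(2s)&0\end{pmatrix}$,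 $B(s,\theta)=I_{2n}\otimes\mathfrak{u}(s,\theta)$. $Y_{s,\lambda}$: absolutely continuous solutions on $[-L,L]$ of $\mathbf{p}'=A(x,\lambda)\mathbf{p}$, $\mathbf{w}'=B(s,\theta)\mathbf{w}$ ($\mathbf{p},\mathbf{w}\in\mathbb{R}^{4n}$), no boundary conditions. $\Phi_s^\lambda(\mathbf{p},\mathbf{w})=(\mathbf{p}(-s),\mathbf{w}(-s),\mathbf{p}(s),\mathbf{w}(s))^\top$. $\omega(v_1,v_2)=\langle v_1,\Omega v_2\rangle$, $\Omega=(J\otimes I_{2n})\oplus(J^\top\otimes I_{2n})\oplus(J^\top\otimes I_{2n})\oplus(J\otimes I_{2n})$. $X=\{(p,q,w,z)\in\mathbb{R}^{8n}: p=w, q=z\}$. A crossing of a path $t\mapsto\Phi(t)$ of Lagrangian planes is a parameter value $t_0$ with $\Phi(t_0)\cap(X\times X)\neq\{0\}$; the crossing form $Q$ on $\Phi(t_0)\cap(X\times X)$ is $Q(v,v)=\frac{d}{dt}\omega(v,\phi(t)v)|_{t_0}$ where $\Phi(t)$ is the graph of $\phi(t):\Phi(t_0)\to W$, $W$ a fixed complement. Curves for $s_0\in(0,L)$, $\lambda_\infty>0$: $\Gamma_1:\lambda\mapsto\Phi_{s_0}^\lambda(Y_{s_0,\lambda})$, $\lambda\in[0,\lambda_\infty]$; $\Gamma_2:s\mapsto\Phi_s^{\lambda_\infty}(Y_{s,\lambda_\infty})$, $s\in[s_0,L]$. For a path $\Gamma_i$ on $[a_i,b_i]$, $B_i=|\tfrac12\operatorname{sign}Q(a_i)|+\sum_{a_i<t<b_i}|\operatorname{sign}Q(t)|+|\tfrac12\operatorname{sign}Q(b_i)|$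 (number of crossings counted with multiplicity, regardless of sign). *)

theory Defs
  imports "HOL-Analysis.Analysis"
begin

definition absolutely_continuous_on ::
  "(real \<Rightarrow> 'a::real_normed_vector) \<Rightarrow> real set \<Rightarrow> bool" where
  "absolutely_continuous_on f S \<longleftrightarrow>
     (\<forall>\<epsilon>>0. \<exists>\<delta>>0. \<forall>I::(real \<times> real) set.
        finite I \<and> (\<forall>(a,b)\<in>I. a \<le> b \<and> {a..b} \<subseteq> S) \<and>
        pairwise (\<lambda>(a,b) (c,d). {a<..<b} \<inter> {c<..<d} = {}) I \<and>
        (\<Sum>(a,b)\<in>I. b - a) < \<delta>
        \<longrightarrow> (\<Sum>(a,b)\<in>I. norm (f b - f a)) < \<epsilon>)"

definition piecewise_continuous :: "(real \<Rightarrow> real) \<Rightarrow> bool" where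
  "piecewise_continuous f \<longleftrightarrow>
     (\<forall>a b. \<exists>S. finite S \<and> (\<forall>x\<in>{a..b} - S. isCont f x) \<and>
        (\<forall>x\<in>S. (\<exists>l. (f \<longlongrightarrow> l) (at_left x)) \<and> (\<exists>r. (f \<longlongrightarrow> r) (at_right x))))"

definition Vnorm_inf :: "(real \<Rightarrow> real^'n^'n::finite) \<Rightarrow> real \<Rightarrow> real" where
  "Vnorm_inf V L = Sup ((\<lambda>x. onorm (\<lambda>v. V x *v v)) ` {-L..L})"

definition complexify :: "real^'n^'n \<Rightarrow> complex^'n^'n" where
  "complexify M = (\<chi> i j. complex_of_real (M $ i $ j))"

text \<open>\<open>\<mu>\<close> is an eigenvalue of \<open>H_{\<theta>,s} y = y'' + V y\<close> on \<open>L\<^sup>2([-s,s];\<complex>\<^sup>n)\<close> with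
  \<open>\<theta>\<close>-periodic boundary conditions: there is a nonzero \<open>y\<close> in the domain
  (\<open>y, y'\<close> absolutely continuous, \<open>y'' \<in> L\<^sup>2\<close>, boundary conditions) with \<open>H y = \<mu> y\<close> a.e.\<close>
definition is_eigenvalue_H ::
  "(real \<Rightarrow> real^'n^'n::finite) \<Rightarrow> real \<Rightarrow> real \<Rightarrow> complex \<Rightarrow> bool" where
  "is_eigenvalue_H V \<theta> s \<mu> \<longleftrightarrow>
     (\<exists>(y::real \<Rightarrow> complex^'n::finite) y1 y2.
        absolutely_continuous_on y {-s..s} \<and>
        absolutely_continuous_on y1 {-s..s} \<and>
        (AE x in lebesgue. x \<in> {-s..s} \<longrightarrow> (y has_vector_derivative y1 x) (at x)) \<and>
        (AE x in lebesgue. x \<in> {-s..s} \<longrightarrow> (y1 has_vector_derivative y2 x) (at x)) \<and>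
        y2 \<in> borel_measurable (lebesgue_on {-s..s}) \<and>
        integrable (lebesgue_on {-s..s}) (\<lambda>x. (norm (y2 x))\<^sup>2) \<and>
        y s = exp (\<i> * complex_of_real \<theta>) *s y (-s) \<and>
        y1 s = exp (\<i> * complex_of_real \<theta>) *s y1 (-s) \<and>
        (AE x in lebesgue. x \<in> {-s..s} \<longrightarrow> y2 x + complexify (V x) *v y x = \<mu> *s y x) \<and>
        (\<exists>x\<in>{-s..s}. y x \<noteq> 0))"

text \<open>Coordinates of \<open>\<real>\<^sup>4\<^sup>n\<close> are indexed by \<open>((r,i),a) :: (bool \<times> 'n) \<times> bool\<close>,
  which in lexicographic order (False < True) is the flat index \<open>(r n + i) 2 + a\<close>;
  \<open>r\<close> selects the block (position/derivative) of \<open>\<bold>p\<close>, \<open>(i,a)\<close> is the Kronecker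
  index of \<open>V \<otimes> I\<^sub>2\<close>; for \<open>\<bold>w\<close>, \<open>(r,i)\<close> is the index of \<open>I\<^sub>2\<^sub>n\<close> and \<open>a\<close> that of \<open>\<u>\<close>.\<close>

definition kronI2 :: "real^'n^'n \<Rightarrow> real^('n \<times> bool)^('n \<times> bool)" where
  "kronI2 M = (\<chi> ia jb. if snd ia = snd jb then M $ fst ia $ fst jb else 0)"

definition Amat :: "(real \<Rightarrow> real^'n^'n::finite) \<Rightarrow> real \<Rightarrow> real \<Rightarrow>
    real^((bool \<times> 'n::finite) \<times> bool)^((bool \<times> 'n) \<times> bool)" where
  "Amat V x lam = (\<chi> ria cjb.
     let r = fst (fst ria); i = snd (fst ria); a = snd ria;
         c = fst (fst cjb); j = snd (fst cjb); b = snd cjb in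
     if \<not> r \<and> \<not> c then 0
     else if \<not> r \<and> c then (if (i,a) = (j,b) then 1 else 0)
     else if r \<and> \<not> c then (if (i,a) = (j,b) then lam else 0) - kronI2 (V x) $ (i,a) $ (j,b)
     else 0)"

definition umat :: "real \<Rightarrow> real \<Rightarrow> real^bool^bool" where
  "umat s \<theta> = (\<chi> a b. if \<not> a \<and> b then - \<theta> / (2 * s)
                      else if a \<and> \<not> b then \<theta> / (2 * s) else 0)"

definition Bmat :: "real \<Rightarrow> real \<Rightarrow> real^((bool \<times> 'n::finite) \<times> bool)^((bool \<times> 'n) \<times> bool)" where
  "Bmat s \<theta> = (\<chi> ka lb. if fst ka = fst lb then umat s \<theta> $ snd ka $ snd lb else 0)"

definition Ysol :: "(real \<Rightarrow> real^'n^'n::finite) \<Rightarrow> real \<Rightarrow> real \<Rightarrow> real \<Rightarrow> real \<Rightarrow>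
    ((real \<Rightarrow> real^((bool \<times> 'n::finite) \<times> bool)) \<times> (real \<Rightarrow> real^((bool \<times> 'n) \<times> bool))) set" where
  "Ysol V L \<theta> s lam = {(p, w).
     absolutely_continuous_on p {-L..L} \<and> absolutely_continuous_on w {-L..L} \<and>
     (AE x in lebesgue. x \<in> {-L..L} \<longrightarrow> (p has_vector_derivative (Amat V x lam *v p x)) (at x)) \<and>
     (AE x in lebesgue. x \<in> {-L..L} \<longrightarrow> (w has_vector_derivative (Bmat s \<theta> *v w x)) (at x))}"

definition Phi :: "real \<Rightarrow> (real \<Rightarrow> 'k) \<times> (real \<Rightarrow> 'k) \<Rightarrow> ('k \<times> 'k) \<times> ('k \<times> 'k)" where
  "Phi s pw = ((fst pw (-s), snd pw (-s)), (fst pw s, snd pw s))"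

text \<open>\<open>X = {(p,q,w,z). p = w, q = z}\<close>, a point of \<open>\<real>\<^sup>8\<^sup>n\<close> being the pair \<open>((p,q),(w,z))\<close>.\<close>
definition Xset :: "('k \<times> 'k) set" where
  "Xset = {(u, v). u = v}"

definition is_crossing :: "(real \<Rightarrow> real^'n^'n::finite) \<Rightarrow> real \<Rightarrow> real \<Rightarrow> real \<Rightarrow> real \<Rightarrow> bool" where
  "is_crossing V L \<theta> s lam \<longleftrightarrow> (Phi s ` Ysol V L \<theta> s lam) \<inter> (Xset \<times> Xset) \<noteq> {0}"

end

theory Submission
  imports Defs
begin

text \<open>For a solution of \<open>y'' + V y = \<lambda> y\<close> with the boundary conditions of \<open>H\<^sub>\<theta>\<^sub>,\<^sub>s\<close>,
  integrating \<open>\<langle>y', y\<rangle>' = |y'|\<^sup>2 + \<langle>(\<lambda> - V) y, y\<rangle>\<close> over \<open>[-s,s]\<close> (the boundary terms cancel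
  since \<open>|e\<^sup>i\<^sup>\<theta>| = 1\<close>) gives \<open>\<parallel>y'\<parallel>\<^sup>2 + (\<lambda> - \<parallel>V\<parallel>\<^sub>\<infinity>) \<parallel>y\<parallel>\<^sup>2 \<le> 0\<close>. If \<open>\<lambda> > \<parallel>V\<parallel>\<^sub>\<infinity>\<close> this forces
  \<open>y = 0\<close>. If \<open>0 \<le> \<lambda>\<close> and \<open>s\<close> is small, a Wirtinger inequality for twisted boundary conditions,
  \<open>c(\<theta>) \<parallel>y\<parallel>\<^sup>2 \<le> s\<^sup>2 \<parallel>y'\<parallel>\<^sup>2\<close> with \<open>c(\<theta>) \<ge> min \<theta> (2\<pi> - \<theta>)\<^sup>2 / 8\<close>, makes the same estimate
  conclusive. A crossing is a solution of the first order system with boundary data in \<open>X \<times> X\<close>;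
  since \<open>\<bold>w' = B \<bold>w\<close> rotates by exactly \<open>e\<^sup>i\<^sup>\<theta>\<close> across \<open>[-s,s]\<close>, its position block is such a
  twisted solution and vanishes, and with it the boundary data. Solutions are only absolutely
  continuous, so everything rests on a fundamental theorem of calculus for a.e.\ derivatives,
  proved by a Cousin-lemma argument.\<close>

section \<open>Absolute continuity\<close>

definition interval_packing :: "real set \<Rightarrow> (real \<times> real) set \<Rightarrow> bool" where
  "interval_packing S I \<longleftrightarrow> finite I \<and> (\<forall>(a,b)\<in>I. a \<le> b \<and> {a..b} \<subseteq> S) \<and>
     pairwise (\<lambda>(a,b) (c,d). {a<..<b} \<inter> {c<..<d} = {}) I"

lemma absolutely_continuous_on_packing:
  "absolutely_continuous_on f S \<longleftrightarrow>
     (\<forall>e>0. \<exists>d>0. \<forall>I. interval_packing S I \<and> (\<Sum>(a,b)\<in>I. b - a) < d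
        \<longrightarrow> (\<Sum>(a,b)\<in>I. norm (f b - f a)) < e)"
  unfolding absolutely_continuous_on_def interval_packing_def by (simp add: conj_assoc)

lemma absolutely_continuous_onI:
  assumes "\<And>e. e > 0 \<Longrightarrow> \<exists>d>0. \<forall>I. interval_packing S I \<longrightarrow> (\<Sum>(a,b)\<in>I. b - a) < d
             \<longrightarrow> (\<Sum>(a,b)\<in>I. norm (f b - f a)) < e"
  shows "absolutely_continuous_on f S"
  using assms unfolding absolutely_continuous_on_packing by blast

lemma absolutely_continuous_onE:
  assumes "absolutely_continuous_on f S" "e > 0"
  obtains d where "d > 0" "\<And>I. interval_packing S I \<Longrightarrow> (\<Sum>(a,b)\<in>I. b - a) < d
                     \<Longrightarrow> (\<Sum>(a,b)\<in>I. norm (f b - f a)) < e"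
  using assms unfolding absolutely_continuous_on_packing by blast

lemma interval_packing_subset: "interval_packing S I \<Longrightarrow> S \<subseteq> T \<Longrightarrow> interval_packing T I"
  unfolding interval_packing_def by blast

lemma interval_packing_endpoints:
  "interval_packing S I \<Longrightarrow> (u, v) \<in> I \<Longrightarrow> u \<le> v \<and> u \<in> S \<and> v \<in> S"
  unfolding interval_packing_def by fastforce

lemma absolutely_continuous_on_subset:
  "absolutely_continuous_on f S \<Longrightarrow> T \<subseteq> S \<Longrightarrow> absolutely_continuous_on f T"
  unfolding absolutely_continuous_on_packing by (meson interval_packing_subset)

lemma absolutely_continuous_imp_continuous_on:
  fixes f :: "real \<Rightarrow> 'a::real_normed_vector"
  assumes ac: "absolutely_continuous_on f {a..b}"
  shows "continuous_on {a..b} f"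
  unfolding continuous_on_iff
proof (intro ballI allI impI)
  fix x e assume x: "x \<in> {a..b}" and e: "(e::real) > 0"
  obtain d where d: "d > 0" and H: "\<And>I. interval_packing {a..b} I \<Longrightarrow> (\<Sum>(u,v)\<in>I. v - u) < d
                     \<Longrightarrow> (\<Sum>(u,v)\<in>I. norm (f v - f u)) < e"
    using absolutely_continuous_onE[OF ac e] by blast
  have "dist (f y) (f x) < e" if y: "y \<in> {a..b}" "dist y x < d" for y
  proof -
    have "(\<Sum>(u,v)\<in>{(min x y, max x y)}. norm (f v - f u)) < e"
      by (rule H) (use x y in \<open>auto simp: interval_packing_def dist_real_def\<close>)
    then show ?thesis
      by (cases "x \<le> y") (auto simp: dist_norm norm_minus_commute min_def max_def)
  qed
  then show "\<exists>d>0. \<forall>y\<in>{a..b}. dist y x < d \<longrightarrow> dist (f y) (f x) < e"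
    using d by blast
qed

lemma absolutely_continuous_on_linear:
  assumes T: "bounded_linear T" and ac: "absolutely_continuous_on f S"
  shows "absolutely_continuous_on (\<lambda>x. T (f x)) S"
proof (rule absolutely_continuous_onI)
  fix e :: real assume e: "e > 0"
  obtain K where K: "K > 0" "\<And>x. norm (T x) \<le> norm x * K"
    using bounded_linear.pos_bounded[OF T] by blast
  obtain d where d: "d > 0" and H: "\<And>I. interval_packing S I \<Longrightarrow> (\<Sum>(a,b)\<in>I. b - a) < d
                     \<Longrightarrow> (\<Sum>(a,b)\<in>I. norm (f b - f a)) < e / K"
    using absolutely_continuous_onE[OF ac, of "e / K"] e K by auto
  have "(\<Sum>(a,b)\<in>I. norm (T (f b) - T (f a))) < e"
    if I: "interval_packing S I" "(\<Sum>(a,b)\<in>I. b - a) < d" for I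
  proof -
    have "(\<Sum>(a,b)\<in>I. norm (T (f b) - T (f a))) \<le> (\<Sum>(a,b)\<in>I. norm (f b - f a) * K)"
      using K(2) by (intro sum_mono) (auto simp: linear_diff[OF bounded_linear.linear[OF T], symmetric])
    also have "\<dots> = (\<Sum>(a,b)\<in>I. norm (f b - f a)) * K"
      by (simp add: sum_distrib_right case_prod_beta)
    also have "\<dots> < e" using H[OF I] K by (simp add: field_simps)
    finally show ?thesis .
  qed
  then show "\<exists>d>0. \<forall>I. interval_packing S I \<longrightarrow> (\<Sum>(a,b)\<in>I. b - a) < d
               \<longrightarrow> (\<Sum>(a,b)\<in>I. norm (T (f b) - T (f a))) < e"
    using d by blast
qed

lemma absolutely_continuous_on_add:
  assumes f: "absolutely_continuous_on f S" and g: "absolutely_continuous_on g S"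
  shows "absolutely_continuous_on (\<lambda>x. f x + g x) S"
proof (rule absolutely_continuous_onI)
  fix e :: real assume e: "e > 0"
  obtain d1 where d1: "d1 > 0" and H1: "\<And>I. interval_packing S I \<Longrightarrow> (\<Sum>(a,b)\<in>I. b - a) < d1
                     \<Longrightarrow> (\<Sum>(a,b)\<in>I. norm (f b - f a)) < e / 2"
    using absolutely_continuous_onE[OF f, of "e / 2"] e by auto
  obtain d2 where d2: "d2 > 0" and H2: "\<And>I. interval_packing S I \<Longrightarrow> (\<Sum>(a,b)\<in>I. b - a) < d2
                     \<Longrightarrow> (\<Sum>(a,b)\<in>I. norm (g b - g a)) < e / 2"
    using absolutely_continuous_onE[OF g, of "e / 2"] e by auto
  have "(\<Sum>(a,b)\<in>I. norm ((f b + g b) - (f a + g a))) < e"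
    if I: "interval_packing S I" "(\<Sum>(a,b)\<in>I. b - a) < min d1 d2" for I
  proof -
    have "(\<Sum>(a,b)\<in>I. norm ((f b + g b) - (f a + g a)))
        \<le> (\<Sum>(a,b)\<in>I. norm (f b - f a) + norm (g b - g a))"
      by (intro sum_mono) (auto simp: add_diff_add intro: norm_triangle_ineq)
    also have "\<dots> = (\<Sum>(a,b)\<in>I. norm (f b - f a)) + (\<Sum>(a,b)\<in>I. norm (g b - g a))"
      by (simp add: sum.distrib case_prod_beta)
    also have "\<dots> < e" using H1[OF I(1)] H2[OF I(1)] I(2) by simp
    finally show ?thesis .
  qed
  then show "\<exists>d>0. \<forall>I. interval_packing S I \<longrightarrow> (\<Sum>(a,b)\<in>I. b - a) < d
               \<longrightarrow> (\<Sum>(a,b)\<in>I. norm ((f b + g b) - (f a + g a))) < e"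
    using d1 d2 by (intro exI[of _ "min d1 d2"]) auto
qed

lemma lipschitz_on_imp_absolutely_continuous_on:
  fixes f :: "real \<Rightarrow> 'a::real_normed_vector"
  assumes L: "B-lipschitz_on S f"
  shows "absolutely_continuous_on f S"
proof (rule absolutely_continuous_onI)
  fix e :: real assume e: "e > 0"
  have B: "B \<ge> 0" using lipschitz_on_nonneg[OF L] .
  have "(\<Sum>(a,b)\<in>I. norm (f b - f a)) < e"
    if I: "interval_packing S I" "(\<Sum>(a,b)\<in>I. b - a) < e / (B + 1)" for I
  proof -
    have "(\<Sum>(a,b)\<in>I. norm (f b - f a)) \<le> (\<Sum>(a,b)\<in>I. (B + 1) * (b - a))"
    proof (intro sum_mono, clarify)
      fix u v assume "(u, v) \<in> I"
      then have uv: "u \<le> v" "u \<in> S" "v \<in> S" using interval_packing_endpoints[OF I(1)] by auto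
      have "norm (f v - f u) \<le> B * (v - u)"
        using lipschitz_onD[OF L uv(3,2)] uv by (simp add: dist_norm dist_real_def)
      also have "\<dots> \<le> (B + 1) * (v - u)" using uv by (intro mult_right_mono) auto
      finally show "norm (f v - f u) \<le> (B + 1) * (v - u)" .
    qed
    also have "\<dots> = (B + 1) * (\<Sum>(a,b)\<in>I. b - a)"
      by (simp add: sum_distrib_left case_prod_beta)
    also have "\<dots> < e" using I(2) B by (simp add: field_simps)
    finally show ?thesis .
  qed
  then show "\<exists>d>0. \<forall>I. interval_packing S I \<longrightarrow> (\<Sum>(a,b)\<in>I. b - a) < d
               \<longrightarrow> (\<Sum>(a,b)\<in>I. norm (f b - f a)) < e"
    using e B by (intro exI[of _ "e / (B + 1)"]) auto
qed

lemma has_vector_derivative_continuous_imp_absolutely_continuous_on: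
  fixes f f' :: "real \<Rightarrow> 'a::real_normed_vector"
  assumes der: "\<And>x. x \<in> {a..b} \<Longrightarrow> (f has_vector_derivative f' x) (at x within {a..b})"
    and f': "continuous_on {a..b} f'"
  shows "absolutely_continuous_on f {a..b}"
proof -
  obtain B where B: "\<And>x. x \<in> {a..b} \<Longrightarrow> norm (f' x) \<le> B" and "B \<ge> 0"
    using compact_imp_bounded[OF compact_continuous_image[OF f' compact_Icc]]
    unfolding bounded_iff by (meson max.cobounded2 max.coboundedI1 imageI)
  have "norm (f x - f y) \<le> B * norm (x - y)" if "x \<in> {a..b}" "y \<in> {a..b}" for x y
  proof (rule differentiable_bound[of "{a..b}" f "\<lambda>x h. h *\<^sub>R f' x"])
    show "(f has_derivative (\<lambda>h. h *\<^sub>R f' z)) (at z within {a..b})" if "z \<in> {a..b}" for z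
      using der[OF that] by (simp add: has_vector_derivative_def)
    show "onorm (\<lambda>h. h *\<^sub>R f' z) \<le> B" if "z \<in> {a..b}" for z
      using B[OF that] by (simp add: onorm_scaleR_left bounded_linear_ident onorm_id)
  qed (use that in auto)
  then have "B-lipschitz_on {a..b} f"
    using \<open>B \<ge> 0\<close> by (intro lipschitz_onI) (auto simp: dist_norm)
  then show ?thesis by (rule lipschitz_on_imp_absolutely_continuous_on)
qed

lemma bounded_bilinear_diff_le:
  assumes bb: "bounded_bilinear bp" and K: "\<And>x y. norm (bp x y) \<le> norm x * norm y * K" "K \<ge> 0"
    and x: "norm x \<le> F" and y': "norm y' \<le> G"
  shows "norm (bp x' y' - bp x y) \<le> (K*G) * norm (x' - x) + (K*F) * norm (y' - y)"
proof -
  have eq: "bp x' y' - bp x y = bp (x' - x) y' + bp x (y' - y)"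
    by (simp add: bounded_bilinear.diff_left[OF bb] bounded_bilinear.diff_right[OF bb])
  have n1: "norm (bp (x' - x) y') \<le> (K*G) * norm (x' - x)"
    using order_trans[OF K(1) mult_right_mono[OF mult_left_mono[OF y'] K(2)]] by (simp add: algebra_simps)
  have n2: "norm (bp x (y' - y)) \<le> (K*F) * norm (y' - y)"
    using order_trans[OF K(1) mult_right_mono[OF mult_right_mono[OF x] K(2)]] by (simp add: algebra_simps)
  show ?thesis unfolding eq by (rule order_trans[OF norm_triangle_ineq add_mono[OF n1 n2]])
qed

lemma absolutely_continuous_on_bilinear:
  fixes f :: "real \<Rightarrow> 'a::real_normed_vector" and g :: "real \<Rightarrow> 'b::real_normed_vector"
  assumes bb: "bounded_bilinear bp" and f: "absolutely_continuous_on f {a..b}"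
    and g: "absolutely_continuous_on g {a..b}"
  shows "absolutely_continuous_on (\<lambda>x. bp (f x) (g x)) {a..b}"
proof (rule absolutely_continuous_onI)
  fix e :: real assume e: "e > 0"
  obtain K where K: "K > 0" "\<And>x y. norm (bp x y) \<le> norm x * norm y * K"
    using bounded_bilinear.pos_bounded[OF bb] by blast
  obtain F where F: "F > 0" "\<And>x. x \<in> {a..b} \<Longrightarrow> norm (f x) \<le> F"
    using compact_imp_bounded[OF compact_continuous_image[OF absolutely_continuous_imp_continuous_on[OF f]]]
    unfolding bounded_pos by auto
  obtain G where G: "G > 0" "\<And>x. x \<in> {a..b} \<Longrightarrow> norm (g x) \<le> G"
    using compact_imp_bounded[OF compact_continuous_image[OF absolutely_continuous_imp_continuous_on[OF g]]]
    unfolding bounded_pos by auto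
  obtain d1 where d1: "d1 > 0" and H1: "\<And>I. interval_packing {a..b} I \<Longrightarrow> (\<Sum>(u,v)\<in>I. v - u) < d1
                     \<Longrightarrow> (\<Sum>(u,v)\<in>I. norm (f v - f u)) < e / (2*K*G)"
    using absolutely_continuous_onE[OF f, of "e / (2*K*G)"] e K G by auto
  obtain d2 where d2: "d2 > 0" and H2: "\<And>I. interval_packing {a..b} I \<Longrightarrow> (\<Sum>(u,v)\<in>I. v - u) < d2
                     \<Longrightarrow> (\<Sum>(u,v)\<in>I. norm (g v - g u)) < e / (2*K*F)"
    using absolutely_continuous_onE[OF g, of "e / (2*K*F)"] e K F by auto
  have step: "norm (bp (f v) (g v) - bp (f u) (g u)) \<le> (K*G) * norm (f v - f u) + (K*F) * norm (g v - g u)"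
    if "u \<in> {a..b}" "v \<in> {a..b}" for u v
    using bounded_bilinear_diff_le[OF bb K(2) _ F(2) G(2)] K(1) that by simp
  have "(\<Sum>(u,v)\<in>I. norm (bp (f v) (g v) - bp (f u) (g u))) < e"
    if I: "interval_packing {a..b} I" "(\<Sum>(u,v)\<in>I. v - u) < min d1 d2" for I
  proof -
    have "(\<Sum>(u,v)\<in>I. norm (bp (f v) (g v) - bp (f u) (g u)))
        \<le> (\<Sum>(u,v)\<in>I. (K*G) * norm (f v - f u) + (K*F) * norm (g v - g u))"
      using interval_packing_endpoints[OF I(1)] step by (intro sum_mono) fastforce
    also have "\<dots> = (K*G) * (\<Sum>(u,v)\<in>I. norm (f v - f u)) + (K*F) * (\<Sum>(u,v)\<in>I. norm (g v - g u))"
      by (simp add: sum.distrib sum_distrib_left case_prod_beta)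
    also have "\<dots> < (K*G) * (e / (2*K*G)) + (K*F) * (e / (2*K*F))"
      using H1[OF I(1)] H2[OF I(1)] I(2) K F G by (intro add_strict_mono mult_strict_left_mono) auto
    also have "\<dots> = e" using K F G by (simp add: field_simps)
    finally show ?thesis .
  qed
  then show "\<exists>d>0. \<forall>I. interval_packing {a..b} I \<longrightarrow> (\<Sum>(u,v)\<in>I. v - u) < d
               \<longrightarrow> (\<Sum>(u,v)\<in>I. norm (bp (f v) (g v) - bp (f u) (g u))) < e"
    using d1 d2 by (intro exI[of _ "min d1 d2"]) auto
qed

lemma negligible_imp_small_open_superset:
  assumes N: "negligible N" and d: "d > 0"
  obtains T where "open T" "N \<subseteq> T" "T \<in> lmeasurable" "measure lebesgue T < d"
proof -
  obtain T where T: "open T" "N \<subseteq> T" "T - N \<in> lmeasurable" "emeasure lebesgue (T - N) < ennreal d"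
    using sets_lebesgue_outer_open[OF negligible_imp_sets[OF N] d] by blast
  have TN: "T = (T - N) \<union> N" using T(2) by auto
  have Tm: "T \<in> lmeasurable"
    using TN T(3) negligible_imp_measurable[OF N] by (metis fmeasurable.Un)
  have "measure lebesgue T \<le> measure lebesgue (T - N) + measure lebesgue N"
    using TN measure_Un_le[OF fmeasurableD[OF T(3)] fmeasurableD[OF negligible_imp_measurable[OF N]]]
    by simp
  also have "\<dots> < d"
    using T(3,4) d negligible_imp_measure0[OF N] by (simp add: emeasure_eq_measure2 ennreal_less_iff)
  finally show ?thesis using that T(1,2) Tm by blast
qed

lemma measure_Union_interval_packing:
  assumes "interval_packing S I"
  shows "measure lebesgue (\<Union>(u,v)\<in>I. {u..v}) = (\<Sum>(u,v)\<in>I. v - u)"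
proof -
  have "pairwise (\<lambda>q r. negligible ((case q of (u,v) \<Rightarrow> {u..v}) \<inter> (case r of (u,v) \<Rightarrow> {u..v}))) I"
  proof (rule pairwiseI)
    fix q r assume qr: "q \<in> I" "r \<in> I" "q \<noteq> r"
    obtain u1 v1 u2 v2 where uv: "q = (u1, v1)" "r = (u2, v2)" by fastforce
    have "{u1<..<v1} \<inter> {u2<..<v2} = {}"
      using assms qr uv unfolding interval_packing_def pairwise_def by fastforce
    then have "{u1..v1} \<inter> {u2..v2} \<subseteq> {u1,v1,u2,v2}" by auto
    then show "negligible ((case q of (u,v) \<Rightarrow> {u..v}) \<inter> (case r of (u,v) \<Rightarrow> {u..v}))"
      unfolding uv prod.case by (rule negligible_subset[OF negligible_finite, rotated]) simp
  qed
  then have "measure lebesgue (\<Union>(u,v)\<in>I. {u..v}) = (\<Sum>(u,v)\<in>I. measure lebesgue {u..v})"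
    using measure_negligible_finite_Union_image[of I "\<lambda>(u,v). {u..v}"] assms
    by (auto simp: interval_packing_def case_prod_beta)
  also have "\<dots> = (\<Sum>(u,v)\<in>I. v - u)"
    using interval_packing_endpoints[OF assms] by (intro sum.cong) auto
  finally show ?thesis .
qed

lemma tagged_division_of_real_intervalD:
  fixes a b :: real
  assumes "p tagged_division_of {a..b}" "(x, K) \<in> p"
  shows "K = {Inf K..Sup K}" "Inf K \<le> x" "x \<le> Sup K" "K \<subseteq> {a..b}"
proof -
  from tagged_division_ofD(4)[OF assms] obtain u v where "K = cbox u v" by blast
  then have K: "K = {u..v}" by (simp add: cbox_interval)
  moreover have "x \<in> K" using tagged_division_ofD(2)[OF assms] .
  ultimately show "K = {Inf K..Sup K}" "Inf K \<le> x" "x \<le> Sup K" by auto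
  show "K \<subseteq> {a..b}" using tagged_division_ofD(3)[OF assms] .
qed

lemma tagged_division_of_real_interior_disjoint:
  fixes a b :: real
  assumes p: "p tagged_division_of {a..b}" and k: "(x, K) \<in> p" "(x', K') \<in> p" "(x, K) \<noteq> (x', K')"
  shows "{Inf K<..<Sup K} \<inter> {Inf K'<..<Sup K'} = {}"
proof -
  have "interior K \<inter> interior K' = {}" using tagged_division_ofD(5)[OF p k] .
  moreover have "interior K = {Inf K<..<Sup K}" "interior K' = {Inf K'<..<Sup K'}"
    using tagged_division_of_real_intervalD(1)[OF p] k by (metis interior_atLeastAtMost_real)+
  ultimately show ?thesis by simp
qed

abbreviation endpoints :: "real \<times> real set \<Rightarrow> real \<times> real" where
  "endpoints \<equiv> \<lambda>(x, K). (Inf K, Sup K)"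

lemma tagged_division_of_endpoints_packing:
  assumes p: "p tagged_division_of {a..b}" and q: "q \<subseteq> p"
  shows "interval_packing {a..b} (endpoints ` q)"
  unfolding interval_packing_def
proof (intro conjI)
  show "finite (endpoints ` q)" using finite_subset[OF q tagged_division_ofD(1)[OF p]] by simp
  show "\<forall>(u,v)\<in>endpoints ` q. u \<le> v \<and> {u..v} \<subseteq> {a..b}"
  proof clarify
    fix x K assume "(x, K) \<in> q"
    then have "(x, K) \<in> p" using q by blast
    from tagged_division_of_real_intervalD[OF p this]
    show "Inf K \<le> Sup K \<and> {Inf K..Sup K} \<subseteq> {a..b}" by auto
  qed
  show "pairwise (\<lambda>(a,b) (c,d). {a<..<b} \<inter> {c<..<d} = {}) (endpoints ` q)"
  proof (rule pairwise_imageI)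
    fix k k' assume kk: "k \<in> q" "k' \<in> q" "k \<noteq> k'"
    obtain x K x' K' where k: "k = (x, K)" "k' = (x', K')" by fastforce
    have "{Inf K<..<Sup K} \<inter> {Inf K'<..<Sup K'} = {}"
      by (rule tagged_division_of_real_interior_disjoint[OF p]) (use kk k q in auto)
    then show "(\<lambda>(a,b) (c,d). {a<..<b} \<inter> {c<..<d} = {}) (endpoints k) (endpoints k')"
      by (simp add: k)
  qed
qed

lemma sum_tagged_division_of_endpoints:
  assumes p: "p tagged_division_of {a..b}" and q: "q \<subseteq> p" and h: "\<And>u. h u u = 0"
  shows "(\<Sum>(u,v)\<in>endpoints ` q. h u v) = (\<Sum>(x,K)\<in>q. h (Inf K) (Sup K))"
proof -
  have "(\<Sum>(u,v)\<in>endpoints ` q. h u v) = sum ((\<lambda>(u,v). h u v) \<circ> endpoints) q"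
  proof (rule sum.reindex_nontrivial)
    show "finite q" using finite_subset[OF q tagged_division_ofD(1)[OF p]] .
    fix k k' assume kk: "k \<in> q" "k' \<in> q" "k \<noteq> k'" "endpoints k = endpoints k'"
    obtain x K x' K' where k: "k = (x, K)" "k' = (x', K')" by fastforce
    have "{Inf K<..<Sup K} = {}"
      using tagged_division_of_real_interior_disjoint[OF p, of x K x' K'] kk k q by auto
    moreover have "Inf K \<le> Sup K"
      using tagged_division_of_real_intervalD(2,3)[OF p, of x K] kk(1) k q by force
    ultimately show "(\<lambda>(u,v). h u v) (endpoints k) = 0"
      using h k by (simp add: not_less)
  qed
  then show ?thesis by (simp add: case_prod_beta o_def)
qed

lemma has_real_derivative_imp_local_linear_bound:
  fixes f :: "real \<Rightarrow> real"
  assumes "(f has_real_derivative d) (at x)" "e > 0"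
  obtains r where "r > 0" "\<And>y. \<bar>y - x\<bar> < r \<Longrightarrow> \<bar>f y - f x - d * (y - x)\<bar> \<le> e * \<bar>y - x\<bar>"
proof -
  have "((\<lambda>y. (f y - f x) / (y - x)) \<longlongrightarrow> d) (at x)"
    using assms(1) has_field_derivative_iff by blast
  then have "eventually (\<lambda>y. dist ((f y - f x) / (y - x)) d < e) (at x)"
    by (rule tendstoD[OF _ assms(2)])
  then obtain r where r: "r > 0" "\<And>y. y \<noteq> x \<Longrightarrow> dist y x < r \<Longrightarrow> dist ((f y - f x) / (y - x)) d < e"
    unfolding eventually_at by auto
  have "\<bar>f y - f x - d * (y - x)\<bar> \<le> e * \<bar>y - x\<bar>" if y: "\<bar>y - x\<bar> < r" for y
  proof (cases "y = x")
    case False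
    then have "\<bar>(f y - f x) / (y - x) - d\<bar> \<le> e" using r(2)[of y] y by (simp add: dist_real_def)
    then have "\<bar>y - x\<bar> * \<bar>(f y - f x) / (y - x) - d\<bar> \<le> \<bar>y - x\<bar> * e" by (intro mult_left_mono) auto
    moreover have "f y - f x - d * (y - x) = (y - x) * ((f y - f x) / (y - x) - d)"
      using False by (simp add: field_simps)
    ultimately show ?thesis by (simp add: abs_mult mult.commute)
  qed simp
  then show ?thesis using that r(1) by blast
qed

lemma increment_ge_of_local_linear_bound:
  fixes f :: "real \<Rightarrow> real"
  assumes "d \<ge> 0" "u \<le> x" "x \<le> v"
    and bound: "\<And>y. y \<in> {u..v} \<Longrightarrow> \<bar>f y - f x - d * (y - x)\<bar> \<le> e * \<bar>y - x\<bar>"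
  shows "- e * (v - u) \<le> f v - f u"
proof -
  have "f v - f x \<ge> d * (v - x) - e * (v - x)" using bound[of v] assms(2,3) by (auto simp: abs_le_iff)
  moreover have "f x - f u \<ge> d * (x - u) - e * (x - u)"
    using bound[of u] assms(2,3) by (auto simp: abs_le_iff algebra_simps)
  moreover have "d * (v - x) \<ge> 0" "d * (x - u) \<ge> 0" using assms(1-3) by auto
  ultimately show ?thesis by (simp add: algebra_simps)
qed

lemma absolutely_continuous_sum_tagged_division_small:
  fixes f :: "real \<Rightarrow> real"
  assumes H: "\<And>I. interval_packing {a..b} I \<Longrightarrow> (\<Sum>(u,v)\<in>I. v - u) < d
                 \<Longrightarrow> (\<Sum>(u,v)\<in>I. norm (f v - f u)) < e"
    and p: "p tagged_division_of {a..b}" and q: "q \<subseteq> p"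
    and qT: "\<And>x K. (x, K) \<in> q \<Longrightarrow> K \<subseteq> T" and T: "T \<in> lmeasurable" "measure lebesgue T < d"
  shows "\<bar>\<Sum>(x,K)\<in>q. f (Sup K) - f (Inf K)\<bar> < e"
proof -
  have I: "interval_packing {a..b} (endpoints ` q)"
    by (rule tagged_division_of_endpoints_packing[OF p q])
  have "(\<Sum>(u,v)\<in>endpoints ` q. v - u) = measure lebesgue (\<Union>(u,v)\<in>endpoints ` q. {u..v})"
    by (rule measure_Union_interval_packing[OF I, symmetric])
  also have "\<dots> \<le> measure lebesgue T"
  proof (rule measure_mono_fmeasurable[OF _ _ T(1)])
    show "(\<Union>(u,v)\<in>endpoints ` q. {u..v}) \<subseteq> T"
      using qT tagged_division_of_real_intervalD(1)[OF p] q by fastforce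
    show "(\<Union>(u,v)\<in>endpoints ` q. {u..v}) \<in> sets lebesgue"
      using I unfolding interval_packing_def by (intro sets.finite_UN) auto
  qed
  finally have "(\<Sum>(u,v)\<in>endpoints ` q. norm (f v - f u)) < e" using T(2) by (intro H[OF I]) simp
  then have "(\<Sum>(x,K)\<in>q. \<bar>f (Sup K) - f (Inf K)\<bar>) < e"
    using sum_tagged_division_of_endpoints[OF p q, of "\<lambda>u v. norm (f v - f u)"] by simp
  moreover have "\<bar>\<Sum>(x,K)\<in>q. f (Sup K) - f (Inf K)\<bar> \<le> (\<Sum>(x,K)\<in>q. \<bar>f (Sup K) - f (Inf K)\<bar>)"
    by (simp add: case_prod_beta sum_abs)
  ultimately show ?thesis by linarith
qed

lemma sum_tagged_division_increment_ge:
  fixes f :: "real \<Rightarrow> real"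
  assumes p: "p tagged_division_of {a..b}" and ab: "a \<le> b" and q: "q \<subseteq> p" and e: "e \<ge> 0"
    and approx: "\<And>x K. (x, K) \<in> q \<Longrightarrow> \<exists>d\<ge>0. \<forall>y\<in>K. \<bar>f y - f x - d * (y - x)\<bar> \<le> e * \<bar>y - x\<bar>"
  shows "- e * (b - a) \<le> (\<Sum>(x,K)\<in>q. f (Sup K) - f (Inf K))"
proof -
  have fin: "finite p" using tagged_division_ofD(1)[OF p] .
  have "(\<Sum>(x,K)\<in>q. - e * (Sup K - Inf K)) \<le> (\<Sum>(x,K)\<in>q. f (Sup K) - f (Inf K))"
  proof (intro sum_mono, clarify)
    fix x K assume xK: "(x, K) \<in> q"
    note K = tagged_division_of_real_intervalD[OF p, of x K]
    obtain d where "d \<ge> 0" "\<And>y. y \<in> K \<Longrightarrow> \<bar>f y - f x - d * (y - x)\<bar> \<le> e * \<bar>y - x\<bar>"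
      using approx[OF xK] by blast
    then show "- e * (Sup K - Inf K) \<le> f (Sup K) - f (Inf K)"
      using increment_ge_of_local_linear_bound[of d "Inf K" x "Sup K" f e] K xK q by blast
  qed
  moreover have "(\<Sum>(x,K)\<in>q. Sup K - Inf K) \<le> (\<Sum>(x,K)\<in>p. Sup K - Inf K)"
    using tagged_division_of_real_intervalD(2,3)[OF p] q by (intro sum_mono2[OF fin]) fastforce+
  moreover have "(\<Sum>(x,K)\<in>p. Sup K - Inf K) = b - a"
    using additive_tagged_division_1[OF ab p, of "\<lambda>x. x"] by simp
  ultimately have "- e * (b - a) \<le> - e * (\<Sum>(x,K)\<in>q. Sup K - Inf K)"
    using e by (intro mult_left_mono_neg) auto
  also have "\<dots> = (\<Sum>(x,K)\<in>q. - e * (Sup K - Inf K))"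
    by (simp add: sum_distrib_left case_prod_beta)
  finally show ?thesis using \<open>(\<Sum>(x,K)\<in>q. - e * (Sup K - Inf K)) \<le> _\<close> by linarith
qed

lemma derivative_gauge_exists:
  fixes f :: "real \<Rightarrow> real"
  assumes T: "open T" and e: "e > 0"
    and der: "\<And>x. x \<in> {a..b} - T \<Longrightarrow> \<exists>d. (f has_real_derivative d) (at x) \<and> d \<ge> 0"
  obtains \<rho> where "\<And>x. \<rho> x > 0" "\<And>x. x \<in> T \<Longrightarrow> ball x (\<rho> x) \<subseteq> T"
    "\<And>x. x \<in> {a..b} - T \<Longrightarrow> \<exists>d\<ge>0. \<forall>y. \<bar>y - x\<bar> < \<rho> x \<longrightarrow> \<bar>f y - f x - d * (y - x)\<bar> \<le> e * \<bar>y - x\<bar>"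
proof -
  define P where "P x r \<longleftrightarrow> (x \<in> T \<longrightarrow> ball x r \<subseteq> T) \<and> (x \<in> {a..b} - T \<longrightarrow>
     (\<exists>d\<ge>0. \<forall>y. \<bar>y - x\<bar> < r \<longrightarrow> \<bar>f y - f x - d * (y - x)\<bar> \<le> e * \<bar>y - x\<bar>))" for x r
  have "\<exists>r>0. P x r" for x
  proof (cases "x \<in> T")
    case True
    then show ?thesis using T open_contains_ball unfolding P_def by blast
  next
    case False
    show ?thesis
    proof (cases "x \<in> {a..b}")
      case True
      then obtain d where d: "(f has_real_derivative d) (at x)" "d \<ge> 0" using der False by blast
      with has_real_derivative_imp_local_linear_bound[OF d(1) e] False show ?thesis
        unfolding P_def by metis
    qed (use False in \<open>auto simp: P_def intro!: exI[of _ 1]\<close>)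
  qed
  then obtain \<rho> where "\<And>x. \<rho> x > 0 \<and> P x (\<rho> x)" by metis
  then show ?thesis using that unfolding P_def by blast
qed

text \<open>A Cousin-lemma argument: away from an open set of small measure covering the exceptional
  set, the gauge makes each increment almost nonnegative; inside it absolute continuity does.\<close>

lemma absolutely_continuous_nonneg_derivative_imp_le:
  fixes f :: "real \<Rightarrow> real"
  assumes ac: "absolutely_continuous_on f {a..b}" and ab: "a \<le> b" and N: "negligible N"
    and der: "\<And>x. x \<in> {a..b} - N \<Longrightarrow> \<exists>d. (f has_real_derivative d) (at x) \<and> d \<ge> 0"
  shows "f a \<le> f b"
proof (rule field_le_epsilon)
  fix \<epsilon> :: real assume "\<epsilon> > 0"
  define w where "w = b - a + 1"
  define e where "e = \<epsilon> / w"
  have "w > 0" using ab by (simp add: w_def)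
  have "e * (b - a) + e = e * w" by (simp add: w_def algebra_simps)
  also have "\<dots> = \<epsilon>" using \<open>w > 0\<close> by (simp add: e_def)
  finally have e: "e > 0" "e * (b - a) + e \<le> \<epsilon>"
    using \<open>\<epsilon> > 0\<close> \<open>w > 0\<close> by (simp_all add: e_def)
  obtain \<delta> where \<delta>: "\<delta> > 0" and H: "\<And>I. interval_packing {a..b} I \<Longrightarrow> (\<Sum>(u,v)\<in>I. v - u) < \<delta>
                     \<Longrightarrow> (\<Sum>(u,v)\<in>I. norm (f v - f u)) < e"
    using absolutely_continuous_onE[OF ac e(1)] by blast
  obtain T where T: "open T" "N \<subseteq> T" "T \<in> lmeasurable" "measure lebesgue T < \<delta>"
    using negligible_imp_small_open_superset[OF N \<delta>] by blast
  obtain \<rho> where \<rho>: "\<And>x. \<rho> x > 0" "\<And>x. x \<in> T \<Longrightarrow> ball x (\<rho> x) \<subseteq> T"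
    "\<And>x. x \<in> {a..b} - T \<Longrightarrow> \<exists>d\<ge>0. \<forall>y. \<bar>y - x\<bar> < \<rho> x \<longrightarrow> \<bar>f y - f x - d * (y - x)\<bar> \<le> e * \<bar>y - x\<bar>"
    using derivative_gauge_exists[OF T(1) e(1), of a b f] der T(2) by blast
  obtain p where p: "p tagged_division_of {a..b}" and fine: "(\<lambda>x. ball x (\<rho> x)) fine p"
    using fine_division_exists_real[of "\<lambda>x. ball x (\<rho> x)" a b] \<rho>(1) by (auto intro: gauge_ball_dependent)
  define pT where "pT = {(x,K)\<in>p. x \<in> T}"
  have inside: "\<bar>\<Sum>(x,K)\<in>pT. f (Sup K) - f (Inf K)\<bar> < e"
  proof (rule absolutely_continuous_sum_tagged_division_small[OF H p _ _ T(3,4)])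
    show "pT \<subseteq> p" unfolding pT_def by blast
    show "K \<subseteq> T" if "(x, K) \<in> pT" for x K
      using that fine \<rho>(2)[of x] unfolding pT_def fine_def by blast
  qed
  have outside: "- e * (b - a) \<le> (\<Sum>(x,K)\<in>p - pT. f (Sup K) - f (Inf K))"
  proof (rule sum_tagged_division_increment_ge[OF p ab _ less_imp_le[OF e(1)]])
    fix x K assume xK: "(x, K) \<in> p - pT"
    then have "(x, K) \<in> p" "x \<notin> T" unfolding pT_def by auto
    then have "x \<in> {a..b} - T" using tagged_division_ofD(2,3)[OF p \<open>(x, K) \<in> p\<close>] by auto
    moreover have "\<bar>y - x\<bar> < \<rho> x" if "y \<in> K" for y
      using that fine xK unfolding fine_def by (force simp: dist_real_def abs_minus_commute)
    ultimately show "\<exists>d\<ge>0. \<forall>y\<in>K. \<bar>f y - f x - d * (y - x)\<bar> \<le> e * \<bar>y - x\<bar>"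
      using \<rho>(3) by blast
  qed blast
  have "f b - f a = (\<Sum>(x,K)\<in>p. f (Sup K) - f (Inf K))"
    using additive_tagged_division_1[OF ab p, of f] by simp
  also have "\<dots> = (\<Sum>(x,K)\<in>pT. f (Sup K) - f (Inf K)) + (\<Sum>(x,K)\<in>p - pT. f (Sup K) - f (Inf K))"
    using sum.subset_diff[of pT p] tagged_division_ofD(1)[OF p] by (simp add: pT_def subset_iff add.commute)
  finally show "f a \<le> f b + \<epsilon>" using inside outside e(2) by linarith
qed

lemma absolutely_continuous_on_integral:
  fixes g :: "real \<Rightarrow> 'a::banach"
  assumes "continuous_on {a..b} g"
  shows "absolutely_continuous_on (\<lambda>x. integral {a..x} g) {a..b}"
  by (rule has_vector_derivative_continuous_imp_absolutely_continuous_on[OF integral_has_vector_derivative[OF assms] assms])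

lemma absolutely_continuous_integral_le:
  fixes f g :: "real \<Rightarrow> real"
  assumes ac: "absolutely_continuous_on f {a..b}" and ab: "a \<le> b" and N: "negligible N"
    and g: "continuous_on {a..b} g"
    and der: "\<And>x. x \<in> {a..b} - N \<Longrightarrow> \<exists>d. (f has_real_derivative d) (at x) \<and> g x \<le> d"
  shows "integral {a..b} g \<le> f b - f a"
proof -
  define h where "h x = f x + - integral {a..x} g" for x
  have ac_h: "absolutely_continuous_on h {a..b}"
    unfolding h_def
    by (intro absolutely_continuous_on_add absolutely_continuous_on_linear[OF bounded_linear_minus[OF bounded_linear_ident]]
        ac absolutely_continuous_on_integral g)
  have der_h: "\<exists>d. (h has_real_derivative d) (at x) \<and> d \<ge> 0" if x: "x \<in> {a..b} - (N \<union> {a,b})" for x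
  proof -
    obtain d where d: "(f has_real_derivative d) (at x)" "g x \<le> d" using der x by blast
    have "((\<lambda>u. integral {a..u} g) has_vector_derivative g x) (at x within {a..b})"
      using x by (intro integral_has_vector_derivative g) auto
    then have "((\<lambda>u. integral {a..u} g) has_real_derivative g x) (at x)"
      using x by (simp add: at_within_Icc_at has_real_derivative_iff_has_vector_derivative)
    then have "(h has_real_derivative d + - g x) (at x)"
      unfolding h_def by (intro DERIV_add d(1) DERIV_minus)
    then show ?thesis using d(2) by auto
  qed
  have "h a \<le> h b"
    using absolutely_continuous_nonneg_derivative_imp_le[OF ac_h ab _ der_h, of "N \<union> {a,b}"] N by simp
  then show ?thesis unfolding h_def by simp
qed

lemma absolutely_continuous_ftc_real:
  fixes f g :: "real \<Rightarrow> real"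
  assumes ac: "absolutely_continuous_on f {a..b}" and ab: "a \<le> b" and N: "negligible N"
    and g: "continuous_on {a..b} g"
    and der: "\<And>x. x \<in> {a..b} - N \<Longrightarrow> (f has_real_derivative g x) (at x)"
  shows "f b - f a = integral {a..b} g"
proof -
  have "integral {a..b} g \<le> f b - f a"
    using der by (intro absolutely_continuous_integral_le[OF ac ab N g]) auto
  moreover have "integral {a..b} (\<lambda>x. - g x) \<le> - f b - - f a"
  proof (rule absolutely_continuous_integral_le[OF _ ab N])
    show "absolutely_continuous_on (\<lambda>x. - f x) {a..b}"
      by (rule absolutely_continuous_on_linear[OF bounded_linear_minus[OF bounded_linear_ident] ac])
    show "continuous_on {a..b} (\<lambda>x. - g x)" using g by (rule continuous_on_minus)
    show "\<exists>d. ((\<lambda>x. - f x) has_real_derivative d) (at x) \<and> - g x \<le> d" if "x \<in> {a..b} - N" for x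
      using DERIV_minus[OF der[OF that]] by blast
  qed
  ultimately show ?thesis by simp
qed

lemma absolutely_continuous_ftc:
  fixes f g :: "real \<Rightarrow> 'a::euclidean_space"
  assumes ac: "absolutely_continuous_on f {a..b}" and ab: "a \<le> b" and N: "negligible N"
    and g: "continuous_on {a..b} g"
    and der: "\<And>x. x \<in> {a..b} - N \<Longrightarrow> (f has_vector_derivative g x) (at x)"
  shows "f b - f a = integral {a..b} g"
proof (rule euclidean_eqI)
  fix i :: 'a assume i: "i \<in> Basis"
  have bl: "bounded_linear (\<lambda>v::'a. v \<bullet> i)" by (rule bounded_linear_inner_left)
  have "f b \<bullet> i - f a \<bullet> i = integral {a..b} (\<lambda>x. g x \<bullet> i)"
    using bounded_linear.has_vector_derivative[OF bl der] g
    by (intro absolutely_continuous_ftc_real[OF absolutely_continuous_on_linear[OF bl ac] ab N])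
       (auto simp: has_real_derivative_iff_has_vector_derivative intro: continuous_intros)
  also have "\<dots> = integral {a..b} g \<bullet> i"
    using integral_linear[OF integrable_continuous_real[OF g] bl] by (simp add: o_def)
  finally show "(f b - f a) \<bullet> i = integral {a..b} g \<bullet> i" by (simp add: inner_diff_left)
qed

lemma absolutely_continuous_has_vector_derivative_within:
  fixes f g :: "real \<Rightarrow> 'a::euclidean_space"
  assumes ac: "absolutely_continuous_on f {a..b}" and N: "negligible N"
    and g: "continuous_on {a..b} g"
    and der: "\<And>x. x \<in> {a..b} - N \<Longrightarrow> (f has_vector_derivative g x) (at x)"
    and x: "x \<in> {a..b}"
  shows "(f has_vector_derivative g x) (at x within {a..b})"
proof -
  have eq: "f a + integral {a..y} g = f y" if y: "y \<in> {a..b}" for y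
  proof -
    have sub: "{a..y} \<subseteq> {a..b}" using y by auto
    have "f y - f a = integral {a..y} g"
      using y der by (intro absolutely_continuous_ftc[OF absolutely_continuous_on_subset[OF ac sub] _ N
            continuous_on_subset[OF g sub]]) auto
    then show ?thesis by (simp add: algebra_simps)
  qed
  have "((\<lambda>y. f a + integral {a..y} g) has_vector_derivative g x) (at x within {a..b})"
    using has_vector_derivative_add[OF has_vector_derivative_const integral_has_vector_derivative[OF g x]]
    by simp
  then show ?thesis
    by (rule has_vector_derivative_transform_within[where d=1]) (use x eq in auto)
qed

lemma AE_lebesgue_obtain_negligible:
  assumes "AE x in lebesgue. P x"
  obtains N where "negligible N" "\<And>x. x \<notin> N \<Longrightarrow> P x"
proof -
  obtain N where N: "{x \<in> space lebesgue. \<not> P x} \<subseteq> N" "emeasure lebesgue N = 0" "N \<in> sets lebesgue"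
    using AE_E[OF assms] by blast
  then have "negligible N" by (simp add: negligible_iff_null_sets null_sets_def)
  then show ?thesis using that N(1) by auto
qed


section \<open>The energy inequality\<close>

lemma inner_mult_both_complex: "inner (c * x) (c * y) = (cmod c)\<^sup>2 * inner x y" for c x y :: complex
proof -
  have h: "(cmod c)\<^sup>2 = (Re c)\<^sup>2 + (Im c)\<^sup>2" by (simp add: cmod_power2)
  show ?thesis unfolding h by (simp add: inner_complex_def power2_eq_square algebra_simps)
qed

lemma inner_scalar_mult_both_complex:
  fixes u w :: "complex^'n"
  shows "inner (c *s u) (c *s w) = (cmod c)\<^sup>2 * inner u w"
  by (simp add: inner_vec_def inner_mult_both_complex sum_distrib_left)

lemma inner_real_scalar_mult_left_complex:
  fixes u w :: "complex^'n"
  shows "inner (complex_of_real r *s u) w = r * inner u w"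
  by (simp add: inner_vec_def inner_complex_def sum_distrib_left algebra_simps)

lemma norm_scalar_mult_complex:
  fixes u :: "complex^'n"
  shows "norm (c *s u) = cmod c * norm u"
proof -
  have "(norm (c *s u))\<^sup>2 = (cmod c * norm u)\<^sup>2"
    by (simp add: power2_norm_eq_inner inner_scalar_mult_both_complex power_mult_distrib)
  then show ?thesis by (simp add: power2_eq_iff_nonneg)
qed

lemma bounded_linear_scalar_mult_complex: "bounded_linear (\<lambda>v::complex^'n. c *s v)"
proof (rule bounded_linear_intro[where K="cmod c"])
  fix r :: real and u :: "complex^'n"
  show "c *s (r *\<^sub>R u) = r *\<^sub>R (c *s u)"
    by (simp add: vec_eq_iff scaleR_conv_of_real algebra_simps)
qed (simp_all add: vector_add_ldistrib norm_scalar_mult_complex)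

text \<open>The quadratic form of the complexification of a real matrix is the sum of the quadratic
  forms of the real and imaginary parts, so it inherits the operator norm bound.\<close>

lemma inner_complexify_le_onorm:
  fixes M :: "real^'n^'n" and v :: "complex^'n"
  shows "inner (complexify M *v v) v \<le> onorm ((*v) M) * inner v v"
proof -
  define a where "a = (\<chi> i. Re (v$i))"
  define b where "b = (\<chi> i. Im (v$i))"
  have comp: "(complexify M *v v)$i = Complex ((M *v a)$i) ((M *v b)$i)" for i
    by (rule complex_eqI)
       (simp_all add: matrix_vector_mult_def complexify_def a_def b_def Re_sum Im_sum)
  have e1: "inner (complexify M *v v) v = inner (M *v a) a + inner (M *v b) b"
    by (simp add: inner_vec_def comp inner_complex_def a_def b_def sum.distrib)
  have e2: "inner v v = inner a a + inner b b"
    by (simp add: inner_vec_def inner_complex_def a_def b_def sum.distrib)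
  have q: "inner (M *v z) z \<le> onorm ((*v) M) * inner z z" for z :: "real^'n"
  proof -
    have "inner (M *v z) z \<le> norm (M *v z) * norm z" by (rule norm_cauchy_schwarz)
    also have "\<dots> \<le> (onorm ((*v) M) * norm z) * norm z"
      by (intro mult_right_mono onorm[OF matrix_vector_mul_bounded_linear]) auto
    finally show ?thesis by (simp add: power2_norm_eq_inner[symmetric] power2_eq_square algebra_simps)
  qed
  show ?thesis using q[of a] q[of b] unfolding e1 e2 by (simp add: algebra_simps)
qed

lemma has_real_derivative_inner:
  fixes f g :: "real \<Rightarrow> 'a::real_inner"
  assumes "(f has_vector_derivative f') (at x)" "(g has_vector_derivative g') (at x)"
  shows "((\<lambda>t. inner (f t) (g t)) has_real_derivative (inner f' (g x) + inner (f x) g')) (at x)"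
proof -
  have "((\<lambda>t. inner (f t) (g t)) has_derivative (\<lambda>h. inner (f x) (h *\<^sub>R g') + inner (h *\<^sub>R f') (g x))) (at x)"
    using assms unfolding has_vector_derivative_def by (rule has_derivative_inner)
  moreover have "(\<lambda>h. inner (f x) (h *\<^sub>R g') + inner (h *\<^sub>R f') (g x)) = (\<lambda>h. (inner f' (g x) + inner (f x) g') * h)"
    by (auto simp: algebra_simps)
  ultimately show ?thesis by (simp add: has_field_derivative_def)
qed

lemma energy_inequality:
  fixes y y1 :: "real \<Rightarrow> complex^'n" and V :: "real \<Rightarrow> real^'n^'n"
  assumes s: "s > 0"
    and acy: "absolutely_continuous_on y {-s..s}" and acy1: "absolutely_continuous_on y1 {-s..s}"
    and N: "negligible N"
    and d0: "\<And>x. x \<in> {-s..s} - N \<Longrightarrow> (y has_vector_derivative y1 x) (at x)"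
    and d1: "\<And>x. x \<in> {-s..s} - N \<Longrightarrow>
              (y1 has_vector_derivative (complex_of_real lam *s y x - complexify (V x) *v y x)) (at x)"
    and bnd: "\<And>x v. x \<in> {-s..s} \<Longrightarrow> inner (complexify (V x) *v v) v \<le> K * inner v v"
    and bc0: "y s = c *s y (-s)" and bc1: "y1 s = c *s y1 (-s)" and c: "cmod c = 1"
  shows "integral {-s..s} (\<lambda>x. (norm (y1 x))\<^sup>2) + (lam - K) * integral {-s..s} (\<lambda>x. (norm (y x))\<^sup>2) \<le> 0"
proof -
  define F where "F x = inner (y1 x) (y x)" for x
  have acF: "absolutely_continuous_on F {-s..s}"
    unfolding F_def by (rule absolutely_continuous_on_bilinear[OF bounded_bilinear_inner acy1 acy])
  have cy: "continuous_on {-s..s} (\<lambda>x. (norm (y x))\<^sup>2)"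
    and cy1: "continuous_on {-s..s} (\<lambda>x. (norm (y1 x))\<^sup>2)"
    by (intro continuous_intros absolutely_continuous_imp_continuous_on acy acy1)+
  have cont: "continuous_on {-s..s} (\<lambda>x. (norm (y1 x))\<^sup>2 + (lam - K) * (norm (y x))\<^sup>2)"
    by (intro continuous_on_add continuous_on_mult_left cy cy1)
  have "integral {-s..s} (\<lambda>x. (norm (y1 x))\<^sup>2 + (lam - K) * (norm (y x))\<^sup>2) \<le> F s - F (-s)"
  proof (rule absolutely_continuous_integral_le[OF acF _ N cont])
    show "-s \<le> s" using s by simp
    fix x assume x: "x \<in> {-s..s} - N"
    have "(F has_real_derivative
            inner (complex_of_real lam *s y x - complexify (V x) *v y x) (y x) + inner (y1 x) (y1 x)) (at x)"
      unfolding F_def by (rule has_real_derivative_inner[OF d1[OF x] d0[OF x]])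
    moreover have "(norm (y1 x))\<^sup>2 + (lam - K) * (norm (y x))\<^sup>2
        \<le> inner (complex_of_real lam *s y x - complexify (V x) *v y x) (y x) + inner (y1 x) (y1 x)"
      using bnd[of x "y x"] x
      by (simp add: inner_diff_left inner_real_scalar_mult_left_complex power2_norm_eq_inner algebra_simps)
    ultimately show "\<exists>d. (F has_real_derivative d) (at x) \<and>
                         (norm (y1 x))\<^sup>2 + (lam - K) * (norm (y x))\<^sup>2 \<le> d"
      by blast
  qed
  moreover have "F s = F (-s)" unfolding F_def bc0 bc1 inner_scalar_mult_both_complex c by simp
  moreover have "integral {-s..s} (\<lambda>x. (norm (y1 x))\<^sup>2 + (lam - K) * (norm (y x))\<^sup>2)
      = integral {-s..s} (\<lambda>x. (norm (y1 x))\<^sup>2) + (lam - K) * integral {-s..s} (\<lambda>x. (norm (y x))\<^sup>2)"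
    by (subst integral_add)
       (auto intro!: integrable_continuous_real continuous_on_mult_left cy cy1 simp: integral_mult_right)
  ultimately show ?thesis by simp
qed

lemma continuous_nonneg_integral_le_0_imp_0:
  fixes h :: "real \<Rightarrow> real"
  assumes "a < b" "continuous_on {a..b} h" "\<And>x. x \<in> {a..b} \<Longrightarrow> h x \<ge> 0"
    "integral {a..b} h \<le> 0" "x \<in> {a..b}"
  shows "h x = 0"
proof -
  have int: "h integrable_on {a..b}" using assms(2) by (rule integrable_continuous_real)
  have "integral {a..b} h \<ge> 0" using assms(3) by (intro integral_nonneg int) auto
  then have "(h has_integral 0) {a..b}" using assms(4) int by (metis antisym has_integral_integral)
  then show ?thesis
    using has_integral_0_cbox_imp_0[of "a" "b" h x] assms by auto
qed


section \<open>A twisted Wirtinger inequality\<close>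

lemma integral_square_le:
  fixes h :: "real \<Rightarrow> real"
  assumes ab: "a < b" and h: "continuous_on {a..b} h"
  shows "(integral {a..b} h)\<^sup>2 \<le> (b - a) * integral {a..b} (\<lambda>x. (h x)\<^sup>2)"
proof -
  define J where "J = integral {a..b} h"
  define Q where "Q = integral {a..b} (\<lambda>x. (h x)\<^sup>2)"
  define t where "t = J / (b - a)"
  have i1: "(\<lambda>x. (h x)\<^sup>2) integrable_on {a..b}" and i2: "(\<lambda>x. 2 * t * h x) integrable_on {a..b}"
    using h by (auto intro!: integrable_continuous_real continuous_on_power continuous_on_mult_left)
  have "0 \<le> integral {a..b} (\<lambda>x. (h x - t)\<^sup>2)"
    using h by (intro integral_nonneg integrable_continuous_real continuous_intros) auto
  also have "\<dots> = integral {a..b} (\<lambda>x. ((h x)\<^sup>2 - 2 * t * h x) + t\<^sup>2)"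
    by (simp add: power2_diff algebra_simps)
  also have "\<dots> = integral {a..b} (\<lambda>x. (h x)\<^sup>2 - 2 * t * h x) + integral {a..b} (\<lambda>x. t\<^sup>2)"
    using i1 i2 by (intro integral_add integrable_diff) auto
  also have "\<dots> = Q - 2 * t * J + t\<^sup>2 * (b - a)"
    using i1 i2 ab unfolding Q_def J_def by (simp add: integral_diff)
  also have "\<dots> = Q - J\<^sup>2 / (b - a)"
  proof -
    obtain w where w: "w = b - a" "w > 0" using ab by simp
    have "2 * (J / w) * J - (J / w)\<^sup>2 * w = J\<^sup>2 / w"
      using w by (simp add: field_simps power2_eq_square)
    then show ?thesis unfolding t_def w(1) by (simp add: algebra_simps)
  qed
  finally show ?thesis using ab unfolding J_def[symmetric] Q_def[symmetric] by (simp add: field_simps)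
qed

text \<open>Wirtinger's inequality for \<open>g(b) = \<mu> g(a)\<close>: \<open>|\<mu> - 1| |g(x)|\<close> is bounded by the
  total variation of \<open>g\<close>, which Cauchy--Schwarz bounds by \<open>\<surd>(b - a) \<parallel>g'\<parallel>\<^sub>2\<close>.\<close>

lemma wirtinger_interval:
  fixes g g' :: "real \<Rightarrow> complex^'n"
  assumes ab: "a < b"
    and der: "\<And>x. x \<in> {a..b} \<Longrightarrow> (g has_vector_derivative g' x) (at x within {a..b})"
    and cg': "continuous_on {a..b} g'"
    and bc: "g b = \<mu> *s g a" and mu: "cmod \<mu> = 1"
  shows "(cmod (\<mu> - 1))\<^sup>2 * integral {a..b} (\<lambda>x. (norm (g x))\<^sup>2)
           \<le> (b - a)\<^sup>2 * integral {a..b} (\<lambda>x. (norm (g' x))\<^sup>2)"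
proof -
  have cg: "continuous_on {a..b} g"
    unfolding continuous_on_eq_continuous_within using der has_vector_derivative_continuous by blast
  have cn: "continuous_on {a..b} (\<lambda>x. norm (g' x))" using cg' by (intro continuous_intros)
  have intn: "(\<lambda>x. norm (g' x)) integrable_on {u..v}" if "{u..v} \<subseteq> {a..b}" for u v
    using that by (intro integrable_continuous_real continuous_on_subset[OF cn])
  have var: "norm (g v - g u) \<le> integral {u..v} (\<lambda>x. norm (g' x))" if uv: "a \<le> u" "u \<le> v" "v \<le> b" for u v
  proof -
    have "(g' has_integral g v - g u) {u..v}"
      using uv by (intro fundamental_theorem_of_calculus)
         (auto intro: has_vector_derivative_within_subset[OF der])
    moreover have "g' integrable_on {u..v}"
      using uv by (intro integrable_continuous_real continuous_on_subset[OF cg']) auto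
    ultimately show ?thesis
      using uv by (metis integral_unique integral_norm_bound_integral intn order_refl atLeastatMost_subset_iff)
  qed
  define J where "J = integral {a..b} (\<lambda>x. norm (g' x))"
  have pointwise: "cmod (\<mu> - 1) * norm (g x) \<le> J" if x: "x \<in> {a..b}" for x
  proof -
    have eq: "(\<mu> - 1) *s g x = \<mu> *s (g x - g a) + (g b - g x)"
      unfolding bc by (simp add: vec_eq_iff algebra_simps)
    have "cmod (\<mu> - 1) * norm (g x) = norm ((\<mu> - 1) *s g x)" by (rule norm_scalar_mult_complex[symmetric])
    also have "\<dots> \<le> norm (g x - g a) + norm (g b - g x)"
      unfolding eq using norm_triangle_ineq by (metis norm_scalar_mult_complex mu mult_1)
    also have "\<dots> \<le> integral {a..x} (\<lambda>x. norm (g' x)) + integral {x..b} (\<lambda>x. norm (g' x))"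
      using x by (intro add_mono var) auto
    also have "\<dots> = J" unfolding J_def
      using x by (intro Henstock_Kurzweil_Integration.integral_combine intn) auto
    finally show ?thesis .
  qed
  have "integral {a..b} (\<lambda>x. (cmod (\<mu> - 1))\<^sup>2 * (norm (g x))\<^sup>2) \<le> integral {a..b} (\<lambda>x. J\<^sup>2)"
  proof (rule integral_le)
    show "(\<lambda>x. (cmod (\<mu> - 1))\<^sup>2 * (norm (g x))\<^sup>2) integrable_on {a..b}"
      using cg by (intro integrable_continuous_real continuous_intros)
    show "(cmod (\<mu> - 1))\<^sup>2 * (norm (g x))\<^sup>2 \<le> J\<^sup>2" if "x \<in> {a..b}" for x
      using power_mono[OF pointwise[OF that]] by (simp add: power_mult_distrib)
  qed (rule integrable_const_ivl)
  also have "\<dots> = J\<^sup>2 * (b - a)" using ab by simp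
  also have "\<dots> \<le> (b - a) * integral {a..b} (\<lambda>x. (norm (g' x))\<^sup>2) * (b - a)"
    using integral_square_le[OF ab cn] ab unfolding J_def by (intro mult_right_mono) auto
  finally have "(cmod (\<mu> - 1))\<^sup>2 * integral {a..b} (\<lambda>x. (norm (g x))\<^sup>2)
      \<le> (b - a) * integral {a..b} (\<lambda>x. (norm (g' x))\<^sup>2) * (b - a)"
    unfolding integral_mult_right .
  then show ?thesis by (simp add: power2_eq_square algebra_simps)
qed

lemma norm_add_scalar_mult_parallelogram:
  fixes u w :: "complex^'n"
  assumes "cmod \<beta> = 1"
  shows "(norm (u + \<beta> *s w))\<^sup>2 + (norm (u + (- \<beta>) *s w))\<^sup>2 = 2 * (norm u)\<^sup>2 + 2 * (norm w)\<^sup>2"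
proof -
  have m: "(- \<beta>) *s w = - (\<beta> *s w)" by (simp add: vec_eq_iff)
  have n: "(norm (\<beta> *s w))\<^sup>2 = (norm w)\<^sup>2" using assms by (simp add: norm_scalar_mult_complex)
  show ?thesis unfolding m using n
    by (simp add: power2_norm_eq_inner inner_add_left inner_add_right inner_commute algebra_simps)
qed

lemma cmod_exp_i_minus_1: "(cmod (exp (\<i> * complex_of_real t) - 1))\<^sup>2 = 2 - 2 * cos t"
  and cmod_minus_exp_i_minus_1: "(cmod (- exp (\<i> * complex_of_real t) - 1))\<^sup>2 = 2 + 2 * cos t"
proof -
  have e: "exp (\<i> * complex_of_real t) = Complex (cos t) (sin t)"
    by (rule complex_eqI) (simp_all add: Re_exp Im_exp)
  show "(cmod (exp (\<i> * complex_of_real t) - 1))\<^sup>2 = 2 - 2 * cos t"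
    unfolding e cmod_power2 using sin_cos_squared_add[of t] by (simp add: power2_diff algebra_simps)
  show "(cmod (- exp (\<i> * complex_of_real t) - 1))\<^sup>2 = 2 + 2 * cos t"
    unfolding e cmod_power2 using sin_cos_squared_add[of t] by (simp add: power2_diff power2_sum algebra_simps)
qed

lemma integral_fold_symmetric_interval:
  fixes f :: "real \<Rightarrow> real"
  assumes s: "s > 0" and f: "continuous_on {-s..s} f"
  shows "integral {-s..0} (\<lambda>x. f x + f (s + x)) = integral {-s..s} f"
proof -
  have f1: "f integrable_on {-s..0}" using s by (intro integrable_continuous_real continuous_on_subset[OF f]) auto
  have "continuous_on {-s..0} (\<lambda>x. f (s + x))"
    by (rule continuous_on_compose2[OF f]) (use s in \<open>auto intro!: continuous_intros\<close>)
  then have f2: "(\<lambda>x. f (s + x)) integrable_on {-s..0}" by (rule integrable_continuous_real)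
  have "integral {-s..0} (\<lambda>x. f x + f (s + x)) = integral {-s..0} f + integral {-s..0} (\<lambda>x. f (s + x))"
    by (rule integral_add[OF f1 f2])
  also have "integral {-s..0} (\<lambda>x. f (s + x)) = integral {0..s} f"
    using integral_shift_Icc_real[of "-s" 0 f s] by (simp add: o_def)
  also have "integral {-s..0} f + integral {0..s} f = integral {-s..s} f"
    using s by (intro Henstock_Kurzweil_Integration.integral_combine integrable_continuous_real f) auto
  finally show ?thesis .
qed

lemma continuous_on_fold_symmetric_interval:
  fixes z :: "real \<Rightarrow> complex^'n"
  assumes s: "s > 0" and z: "continuous_on {-s..s} z"
  shows "continuous_on {-s..0} (\<lambda>x. z x + \<gamma> *s z (s + x))"
proof -
  have "continuous_on {-s..0} (\<lambda>x. z (s + x))"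
    by (rule continuous_on_compose2[OF z]) (use s in \<open>auto intro!: continuous_intros\<close>)
  then show ?thesis
    using s continuous_on_subset[OF z]
    by (intro continuous_on_add bounded_linear.continuous_on[OF bounded_linear_scalar_mult_complex]) auto
qed

text \<open>Folding \<open>[-s,s]\<close> onto \<open>[-s,0]\<close>: \<open>y(x) + \<gamma> y(x + s)\<close> satisfies the boundary condition with
  multiplier \<open>\<gamma> e\<^sup>i\<^sup>\<theta>\<close>, which equals \<open>\<plusminus>e\<^sup>i\<^sup>\<theta>\<^sup>/\<^sup>2\<close> for \<open>\<gamma> = \<plusminus>e\<^sup>-\<^sup>i\<^sup>\<theta>\<^sup>/\<^sup>2\<close>.\<close>

lemma wirtinger_fold:
  fixes y y1 :: "real \<Rightarrow> complex^'n"
  assumes s: "s > 0"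
    and der: "\<And>x. x \<in> {-s..s} \<Longrightarrow> (y has_vector_derivative y1 x) (at x within {-s..s})"
    and cy1: "continuous_on {-s..s} y1"
    and bc: "y s = E *s y (-s)" and E: "cmod E = 1"
    and \<gamma>: "\<gamma> * \<gamma> * E = 1" "cmod \<gamma> = 1"
  shows "(cmod (\<gamma> * E - 1))\<^sup>2 * integral {-s..0} (\<lambda>x. (norm (y x + \<gamma> *s y (s + x)))\<^sup>2)
      \<le> s\<^sup>2 * integral {-s..0} (\<lambda>x. (norm (y1 x + \<gamma> *s y1 (s + x)))\<^sup>2)"
proof -
  have "(cmod (\<gamma> * E - 1))\<^sup>2 * integral {-s..0} (\<lambda>x. (norm ((\<lambda>x. y x + \<gamma> *s y (s + x)) x))\<^sup>2)
      \<le> (0 - (-s))\<^sup>2 * integral {-s..0} (\<lambda>x. (norm ((\<lambda>x. y1 x + \<gamma> *s y1 (s + x)) x))\<^sup>2)"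
  proof (rule wirtinger_interval)
    show "-s < (0::real)" using s by simp
    show "continuous_on {-s..0} (\<lambda>x. y1 x + \<gamma> *s y1 (s + x))"
      by (rule continuous_on_fold_symmetric_interval[OF s cy1])
    show "cmod (\<gamma> * E) = 1" by (simp add: norm_mult \<gamma>(2) E)
    have "E * (\<gamma> * \<gamma>) = 1" using \<gamma>(1) by (simp add: algebra_simps)
    then show "y 0 + \<gamma> *s y (s + 0) = (\<gamma> * E) *s (y (-s) + \<gamma> *s y (s + -s))"
      using bc by (simp add: vec_eq_iff algebra_simps)
  next
    fix x assume x: "x \<in> {-s..0}"
    have d1: "(y has_vector_derivative y1 x) (at x within {-s..0})"
      using der[of x] x s by (auto intro: has_vector_derivative_within_subset)
    have dl: "((\<lambda>x. s + x) has_vector_derivative 1) (at x within {-s..0})"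
      by (auto intro!: derivative_eq_intros)
    have "(y has_vector_derivative y1 (s + x)) (at (s + x) within (\<lambda>x. s + x) ` {-s..0})"
      using der[of "s + x"] x s by (auto intro: has_vector_derivative_within_subset)
    from vector_diff_chain_within[OF dl this]
    have "((\<lambda>x. y (s + x)) has_vector_derivative y1 (s + x)) (at x within {-s..0})"
      by (simp add: o_def)
    from has_vector_derivative_add[OF d1
        bounded_linear.has_vector_derivative[OF bounded_linear_scalar_mult_complex this]]
    show "((\<lambda>x. y x + \<gamma> *s y (s + x)) has_vector_derivative y1 x + \<gamma> *s y1 (s + x)) (at x within {-s..0})" .
  qed
  then show ?thesis by simp
qed

lemma integral_fold_parallelogram:
  fixes z :: "real \<Rightarrow> complex^'n"
  assumes s: "s > 0" and z: "continuous_on {-s..s} z" and \<beta>: "cmod \<beta> = 1"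
  shows "integral {-s..0} (\<lambda>x. (norm (z x + \<beta> *s z (s + x)))\<^sup>2)
       + integral {-s..0} (\<lambda>x. (norm (z x + (-\<beta>) *s z (s + x)))\<^sup>2)
       = 2 * integral {-s..s} (\<lambda>x. (norm (z x))\<^sup>2)"
proof -
  have "integral {-s..0} (\<lambda>x. (norm (z x + \<beta> *s z (s + x)))\<^sup>2)
       + integral {-s..0} (\<lambda>x. (norm (z x + (-\<beta>) *s z (s + x)))\<^sup>2)
      = integral {-s..0} (\<lambda>x. (norm (z x + \<beta> *s z (s + x)))\<^sup>2 + (norm (z x + (-\<beta>) *s z (s + x)))\<^sup>2)"
    by (intro integral_add[symmetric] integrable_continuous_real continuous_on_power continuous_on_norm
        continuous_on_fold_symmetric_interval[OF s z])
  also have "\<dots> = integral {-s..0} (\<lambda>x. 2 * ((norm (z x))\<^sup>2 + (norm (z (s + x)))\<^sup>2))"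
    by (intro integral_cong) (simp only: norm_add_scalar_mult_parallelogram[OF \<beta>] distrib_left[symmetric])
  also have "\<dots> = 2 * integral {-s..0} (\<lambda>x. (norm (z x))\<^sup>2 + (norm (z (s + x)))\<^sup>2)"
    by (rule integral_mult_right)
  also have "integral {-s..0} (\<lambda>x. (norm (z x))\<^sup>2 + (norm (z (s + x)))\<^sup>2) = integral {-s..s} (\<lambda>x. (norm (z x))\<^sup>2)"
    by (rule integral_fold_symmetric_interval[OF s continuous_on_power[OF continuous_on_norm[OF z]]])
  finally show ?thesis .
qed

definition wirtinger_constant :: "real \<Rightarrow> real" where
  "wirtinger_constant \<theta> = min (2 - 2 * cos (\<theta>/2)) (2 + 2 * cos (\<theta>/2))"

lemma wirtinger_twisted:
  fixes y y1 :: "real \<Rightarrow> complex^'n"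
  assumes s: "s > 0"
    and der: "\<And>x. x \<in> {-s..s} \<Longrightarrow> (y has_vector_derivative y1 x) (at x within {-s..s})"
    and cy1: "continuous_on {-s..s} y1"
    and bc: "y s = exp (\<i> * complex_of_real \<theta>) *s y (-s)"
  shows "wirtinger_constant \<theta> * integral {-s..s} (\<lambda>x. (norm (y x))\<^sup>2)
         \<le> s\<^sup>2 * integral {-s..s} (\<lambda>x. (norm (y1 x))\<^sup>2)"
proof -
  define E where "E = exp (\<i> * complex_of_real \<theta>)"
  define h where "h = exp (\<i> * complex_of_real (\<theta>/2))"
  define \<beta> where "\<beta> = exp (- (\<i> * complex_of_real (\<theta>/2)))"
  have hh: "h * h = E" unfolding h_def E_def by (simp add: exp_add[symmetric] field_simps)
  have \<beta>h: "\<beta> * h = 1" unfolding h_def \<beta>_def by (simp add: exp_minus)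
  have c\<beta>: "cmod \<beta> = 1" and cE: "cmod E = 1" unfolding \<beta>_def E_def by (simp_all add: norm_exp_eq_Re)
  have cy: "continuous_on {-s..s} y"
    unfolding continuous_on_eq_continuous_within using der has_vector_derivative_continuous by blast
  have b1: "\<beta> * \<beta> * E = 1" and m1: "\<beta> * E = h"
    unfolding hh[symmetric] using \<beta>h by (simp_all add: algebra_simps)
  have k1: "(cmod (\<beta> * E - 1))\<^sup>2 = 2 - 2 * cos (\<theta>/2)"
    unfolding m1 h_def by (rule cmod_exp_i_minus_1)
  have k2: "(cmod ((-\<beta>) * E - 1))\<^sup>2 = 2 + 2 * cos (\<theta>/2)"
    using m1 cmod_minus_exp_i_minus_1[of "\<theta>/2"] unfolding h_def by simp
  define Y1 where "Y1 = integral {-s..0} (\<lambda>x. (norm (y x + \<beta> *s y (s + x)))\<^sup>2)"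
  define Y2 where "Y2 = integral {-s..0} (\<lambda>x. (norm (y x + (-\<beta>) *s y (s + x)))\<^sup>2)"
  define D1 where "D1 = integral {-s..0} (\<lambda>x. (norm (y1 x + \<beta> *s y1 (s + x)))\<^sup>2)"
  define D2 where "D2 = integral {-s..0} (\<lambda>x. (norm (y1 x + (-\<beta>) *s y1 (s + x)))\<^sup>2)"
  have "(2 - 2 * cos (\<theta>/2)) * Y1 \<le> s\<^sup>2 * D1"
    using wirtinger_fold[OF s der cy1 bc[folded E_def] cE b1 c\<beta>] unfolding k1 Y1_def D1_def .
  moreover have "(2 + 2 * cos (\<theta>/2)) * Y2 \<le> s\<^sup>2 * D2"
    using wirtinger_fold[OF s der cy1 bc[folded E_def] cE, of "-\<beta>"] b1 c\<beta>
    unfolding k2 Y2_def D2_def by simp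
  moreover have "Y1 \<ge> 0" "Y2 \<ge> 0" unfolding Y1_def Y2_def
    by (intro integral_nonneg integrable_continuous_real continuous_on_power continuous_on_norm
        continuous_on_fold_symmetric_interval[OF s cy]; simp)+
  ultimately have "wirtinger_constant \<theta> * (Y1 + Y2) \<le> s\<^sup>2 * (D1 + D2)"
    unfolding wirtinger_constant_def distrib_left
    by (smt (verit) min.cobounded1 min.cobounded2 mult_right_mono)
  moreover have "Y1 + Y2 = 2 * integral {-s..s} (\<lambda>x. (norm (y x))\<^sup>2)"
    unfolding Y1_def Y2_def by (rule integral_fold_parallelogram[OF s cy c\<beta>])
  moreover have "D1 + D2 = 2 * integral {-s..s} (\<lambda>x. (norm (y1 x))\<^sup>2)"
    unfolding D1_def D2_def by (rule integral_fold_parallelogram[OF s cy1 c\<beta>])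
  ultimately show ?thesis by simp
qed


section \<open>Bounds on the potential and on the Wirtinger constant\<close>

lemma tendsto_imp_eventually_abs_le:
  fixes f :: "real \<Rightarrow> real"
  shows "(f \<longlongrightarrow> l) F \<Longrightarrow> eventually (\<lambda>y. \<bar>f y\<bar> \<le> \<bar>l\<bar> + 1) F"
  by (rule eventually_mono[OF tendstoD[OF _ zero_less_one]]) (auto simp: dist_real_def)

lemma piecewise_continuous_locally_bounded:
  assumes pc: "piecewise_continuous f" and x: "x \<in> {a..b}"
  shows "\<exists>e>0. \<exists>B. \<forall>y. \<bar>y - x\<bar> < e \<longrightarrow> \<bar>f y\<bar> \<le> B"
proof -
  obtain S where S: "finite S" "\<forall>x\<in>{a..b}-S. isCont f x"
     "\<forall>x\<in>S. (\<exists>l. (f \<longlongrightarrow> l) (at_left x)) \<and> (\<exists>r. (f \<longlongrightarrow> r) (at_right x))"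
    using pc unfolding piecewise_continuous_def by blast
  have "\<exists>B. eventually (\<lambda>y. \<bar>f y\<bar> \<le> B) (at x)"
  proof (cases "x \<in> S")
    case False
    then have "(f \<longlongrightarrow> f x) (at x)" using S x by (simp add: isCont_def)
    then show ?thesis by (blast dest: tendsto_imp_eventually_abs_le)
  next
    case True
    then obtain l r where "(f \<longlongrightarrow> l) (at_left x)" "(f \<longlongrightarrow> r) (at_right x)" using S by blast
    then have "eventually (\<lambda>y. \<bar>f y\<bar> \<le> max (\<bar>l\<bar> + 1) (\<bar>r\<bar> + 1)) (at_left x)"
      "eventually (\<lambda>y. \<bar>f y\<bar> \<le> max (\<bar>l\<bar> + 1) (\<bar>r\<bar> + 1)) (at_right x)"
      by (auto elim!: eventually_mono dest!: tendsto_imp_eventually_abs_le)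
    then show ?thesis by (auto simp: eventually_at_split)
  qed
  then obtain B d where "d > 0" "\<And>y. y \<noteq> x \<Longrightarrow> dist y x < d \<Longrightarrow> \<bar>f y\<bar> \<le> B"
    unfolding eventually_at by blast
  then have "\<forall>y. \<bar>y - x\<bar> < d \<longrightarrow> \<bar>f y\<bar> \<le> max B \<bar>f x\<bar>"
    by (metis dist_real_def max.coboundedI1 max.cobounded2)
  with \<open>d > 0\<close> show ?thesis by blast
qed

lemma piecewise_continuous_bounded_on:
  assumes pc: "piecewise_continuous f"
  shows "\<exists>B. \<forall>x\<in>{a..b}. \<bar>f x\<bar> \<le> B"
proof -
  have "\<forall>x\<in>{a..b}. \<exists>p. fst p > 0 \<and> (\<forall>y. \<bar>y - x\<bar> < fst p \<longrightarrow> \<bar>f y\<bar> \<le> snd p)"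
  proof
    fix x assume "x \<in> {a..b}"
    from piecewise_continuous_locally_bounded[OF pc this] obtain e B where "e > 0" "\<forall>y. \<bar>y - x\<bar> < e \<longrightarrow> \<bar>f y\<bar> \<le> B" by blast
    then show "\<exists>p. fst p > 0 \<and> (\<forall>y. \<bar>y - x\<bar> < fst p \<longrightarrow> \<bar>f y\<bar> \<le> snd p)"
      by (intro exI[of _ "(e,B)"]) auto
  qed
  then obtain p where p: "\<And>x. x \<in> {a..b} \<Longrightarrow> fst (p x) > 0 \<and> (\<forall>y. \<bar>y - x\<bar> < fst (p x) \<longrightarrow> \<bar>f y\<bar> \<le> snd (p x))"
    by metis
  have cov: "{a..b} \<subseteq> (\<Union>x\<in>{a..b}. ball x (fst (p x)))"
    using p by force
  obtain C where C: "C \<subseteq> {a..b}" "finite C" "{a..b} \<subseteq> (\<Union>x\<in>C. ball x (fst (p x)))"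
    using compactE_image[OF compact_Icc _ cov] by blast
  show ?thesis
  proof (intro exI[of _ "\<Sum>x\<in>C. \<bar>snd (p x)\<bar>"] ballI)
    fix z assume z: "z \<in> {a..b}"
    then obtain x where x: "x \<in> C" "z \<in> ball x (fst (p x))" using C by blast
    then have "\<bar>f z\<bar> \<le> snd (p x)" using p[of x] C(1) by (auto simp: dist_real_def abs_minus_commute)
    also have "\<dots> \<le> \<bar>snd (p x)\<bar>" by simp
    also have "\<dots> \<le> (\<Sum>x\<in>C. \<bar>snd (p x)\<bar>)" using x C(2) by (intro member_le_sum) auto
    finally show "\<bar>f z\<bar> \<le> (\<Sum>x\<in>C. \<bar>snd (p x)\<bar>)" .
  qed
qed

lemma Vnorm_inf_bdd_above:
  fixes V :: "real \<Rightarrow> real^'n^'n"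
  assumes V_pc: "\<And>i j. piecewise_continuous (\<lambda>x. V x $ i $ j)"
  shows "bdd_above ((\<lambda>x. onorm (\<lambda>v. V x *v v)) ` {-L..L})"
proof -
  have "\<forall>i j. \<exists>B. \<forall>x\<in>{-L..L}. \<bar>V x $ i $ j\<bar> \<le> B" using piecewise_continuous_bounded_on[OF V_pc] by blast
  then obtain B where B: "\<And>i j x. x \<in> {-L..L} \<Longrightarrow> \<bar>V x $ i $ j\<bar> \<le> B i j" by metis
  show ?thesis
  proof (rule bdd_aboveI2)
    fix x assume x: "x \<in> {-L..L}"
    have "onorm ((*v) (V x)) \<le> (\<Sum>i\<in>UNIV. \<Sum>j\<in>UNIV. \<bar>V x $ i $ j\<bar>)" by (rule onorm_le_matrix_component_sum)
    also have "\<dots> \<le> (\<Sum>i\<in>UNIV. \<Sum>j\<in>UNIV. B i j)" using B[OF x] by (intro sum_mono) auto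
    finally show "onorm (\<lambda>v. V x *v v) \<le> (\<Sum>i\<in>UNIV. \<Sum>j\<in>UNIV. B i j)" by simp
  qed
qed

lemma onorm_le_Vnorm_inf:
  fixes V :: "real \<Rightarrow> real^'n^'n"
  assumes "\<And>i j. piecewise_continuous (\<lambda>x. V x $ i $ j)" "x \<in> {-L..L}"
  shows "onorm ((*v) (V x)) \<le> Vnorm_inf V L"
  using cSup_upper[OF imageI[OF assms(2)] Vnorm_inf_bdd_above[OF assms(1)]]
  by (simp add: Vnorm_inf_def)

lemma Vnorm_inf_nonneg:
  fixes V :: "real \<Rightarrow> real^'n^'n"
  assumes "\<And>i j. piecewise_continuous (\<lambda>x. V x $ i $ j)" "L > 0"
  shows "Vnorm_inf V L \<ge> 0"
  using onorm_pos_le[OF matrix_vector_mul_bounded_linear, of "V (-L)"] onorm_le_Vnorm_inf[OF assms(1), of "-L" L] assms(2)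
  by simp

lemma quadratic_form_le_Vnorm_inf:
  fixes V :: "real \<Rightarrow> real^'n^'n" and v :: "complex^'n"
  assumes "\<And>i j. piecewise_continuous (\<lambda>x. V x $ i $ j)" "x \<in> {-L..L}"
  shows "inner (complexify (V x) *v v) v \<le> Vnorm_inf V L * inner v v"
proof -
  have "inner (complexify (V x) *v v) v \<le> onorm ((*v) (V x)) * inner v v"
    by (rule inner_complexify_le_onorm)
  also have "\<dots> \<le> Vnorm_inf V L * inner v v"
    using onorm_le_Vnorm_inf[OF assms] by (intro mult_right_mono) auto
  finally show ?thesis .
qed

lemma sin_ge_cubic: "x - \<bar>x\<bar>^3 / 6 \<le> sin (x::real)"
proof -
  have "\<bar>sin x - (\<Sum>m<3. sin_coeff m * x ^ m)\<bar> \<le> inverse (fact 3) * \<bar>x\<bar> ^ 3"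
    by (rule Maclaurin_sin_bound)
  moreover have "(\<Sum>m<3. sin_coeff m * x ^ m) = x"
    by (simp add: numeral_3_eq_3 lessThan_Suc sin_coeff_def)
  moreover have "inverse (fact 3 :: real) = 1/6" by (simp add: numeral_3_eq_3 fact_Suc)
  ultimately have "\<bar>sin x - x\<bar> \<le> \<bar>x\<bar>^3 / 6" by simp
  then show ?thesis using abs_ge_minus_self[of "sin x - x"] by linarith
qed

lemma cos_quadratic_bounds:
  fixes u :: real
  assumes "0 \<le> u" "u \<le> pi/2"
  shows "u\<^sup>2 / 2 \<le> 2 - 2 * cos u" "u\<^sup>2 / 2 \<le> 2 + 2 * cos u"
proof -
  define v where "v = u / 2"
  have v: "0 \<le> v" "v \<le> 1" using assms pi_less_4 unfolding v_def by auto
  have "sin v \<ge> v - \<bar>v\<bar>^3/6" by (rule sin_ge_cubic)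
  moreover have "\<bar>v\<bar>^3 \<le> v"
  proof -
    have "v * v \<le> 1" using v by (simp add: mult_le_one)
    then have "v * v * v \<le> 1 * v" using v by (intro mult_right_mono) auto
    then show ?thesis using v by (simp add: power3_eq_cube)
  qed
  ultimately have sv: "sin v \<ge> 5 * v / 6" by simp
  have cu: "cos u = 1 - 2 * (sin v)\<^sup>2" unfolding v_def using cos_double_sin[of "u/2"] by simp
  have "(5 * v / 6)\<^sup>2 \<le> (sin v)\<^sup>2" using sv v by (intro power_mono) auto
  then have h: "25 * (u * u) \<le> sin (u / 2) * sin (u / 2) * 144" unfolding v_def by (simp add: power2_eq_square)
  have h0: "0 \<le> sin (u / 2) * sin (u / 2)" by simp
  have "u * u \<le> 8 * (sin (u / 2) * sin (u / 2))" using h h0 by linarith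
  moreover have "cos u = 1 - 2 * (sin (u / 2) * sin (u / 2))" using cu unfolding v_def by (simp add: power2_eq_square)
  moreover have "u\<^sup>2 = u * u" by (simp add: power2_eq_square)
  ultimately show "u\<^sup>2 / 2 \<le> 2 - 2 * cos u" by linarith
  have "cos u \<ge> 0" using assms by (intro cos_ge_zero) auto
  moreover have "u\<^sup>2 \<le> 4"
  proof -
    have "u \<le> 2" using assms pi_less_4 by simp
    then have "u * u \<le> 2 * 2" using assms by (intro mult_mono) auto
    then show ?thesis by (simp add: power2_eq_square)
  qed
  ultimately show "u\<^sup>2 / 2 \<le> 2 + 2 * cos u" by simp
qed

lemma wirtinger_constant_ge:
  assumes "0 < \<theta>" "\<theta> < 2*pi"
  shows "(min \<theta> (2*pi - \<theta>))\<^sup>2 / 8 \<le> wirtinger_constant \<theta>"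
proof (cases "\<theta> \<le> pi")
  case True
  then have m: "min \<theta> (2*pi - \<theta>) = 2 * (\<theta>/2)" by simp
  show ?thesis unfolding m wirtinger_constant_def using cos_quadratic_bounds[of "\<theta>/2"] assms True by (simp add: power2_eq_square)
next
  case False
  define u where "u = pi - \<theta>/2"
  have m: "min \<theta> (2*pi - \<theta>) = 2 * u" using False unfolding u_def by simp
  have c: "cos (\<theta>/2) = - cos u" unfolding u_def by simp
  have u: "0 \<le> u" "u \<le> pi/2" using assms False unfolding u_def by auto
  show ?thesis unfolding m c wirtinger_constant_def using cos_quadratic_bounds[OF u] by (simp add: power2_eq_square)
qed


section \<open>Vanishing of twisted solutions\<close>

lemma small_half_length_imp_wirtinger_constant:
  assumes \<theta>: "0 < \<theta>" "\<theta> < 2*pi" and K: "0 \<le> K" "K < lam" and s: "0 < s"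
    and small: "s < (1/2) * min \<theta> (2*pi - \<theta>) / sqrt (K + lam)"
  shows "K * s\<^sup>2 < wirtinger_constant \<theta>"
proof -
  define m where "m = min \<theta> (2*pi - \<theta>)"
  have pos: "K + lam > 0" using K by simp
  have "s * sqrt (K + lam) < m / 2"
    using small pos unfolding m_def by (simp add: field_simps)
  then have "(s * sqrt (K + lam))\<^sup>2 < (m / 2)\<^sup>2"
    using s pos by (intro power_strict_mono) auto
  then have "s\<^sup>2 * (K + lam) < m\<^sup>2 / 4"
    using pos by (simp add: power_mult_distrib power_divide)
  moreover have "2 * K * s\<^sup>2 \<le> s\<^sup>2 * (K + lam)"
    using mult_right_mono[of K lam "s\<^sup>2"] K by (simp add: algebra_simps)
  ultimately have "K * s\<^sup>2 < m\<^sup>2 / 8" by simp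
  also have "\<dots> \<le> wirtinger_constant \<theta>" unfolding m_def by (rule wirtinger_constant_ge[OF \<theta>])
  finally show ?thesis .
qed

lemma twisted_solution_vanishes:
  fixes y y1 :: "real \<Rightarrow> complex^'n" and V :: "real \<Rightarrow> real^'n^'n"
  assumes s: "0 < s"
    and acy: "absolutely_continuous_on y {-s..s}" and acy1: "absolutely_continuous_on y1 {-s..s}"
    and N: "negligible N"
    and d0: "\<And>x. x \<in> {-s..s} - N \<Longrightarrow> (y has_vector_derivative y1 x) (at x)"
    and d1: "\<And>x. x \<in> {-s..s} - N \<Longrightarrow>
              (y1 has_vector_derivative (complex_of_real lam *s y x - complexify (V x) *v y x)) (at x)"
    and bnd: "\<And>x v. x \<in> {-s..s} \<Longrightarrow> inner (complexify (V x) *v v) v \<le> K * inner v v"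
    and bc0: "y s = exp (\<i> * complex_of_real \<theta>) *s y (-s)"
    and bc1: "y1 s = exp (\<i> * complex_of_real \<theta>) *s y1 (-s)"
    and cond: "K < lam \<or> (0 \<le> lam \<and> K * s\<^sup>2 < wirtinger_constant \<theta>)"
    and x: "x \<in> {-s..s}"
  shows "y x = 0"
proof -
  define Y where "Y = integral {-s..s} (\<lambda>x. (norm (y x))\<^sup>2)"
  define D where "D = integral {-s..s} (\<lambda>x. (norm (y1 x))\<^sup>2)"
  have cy: "continuous_on {-s..s} y" and cy1: "continuous_on {-s..s} y1"
    using acy acy1 by (simp_all add: absolutely_continuous_imp_continuous_on)
  have cY: "continuous_on {-s..s} (\<lambda>x. (norm (y x))\<^sup>2)" using cy by (intro continuous_intros)
  have E: "D + (lam - K) * Y \<le> 0"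
    unfolding D_def Y_def
    by (rule energy_inequality[OF _ acy acy1 N d0 d1 bnd bc0 bc1]) (simp_all add: s norm_exp_eq_Re)
  have Y0: "Y \<ge> 0" and D0: "D \<ge> 0"
    unfolding Y_def D_def using cY cy1
    by (auto intro!: integral_nonneg integrable_continuous_real continuous_intros)
  have "Y \<le> 0"
    using cond
  proof
    assume "K < lam"
    then show "Y \<le> 0" using E D0 by (smt (verit) mult_pos_pos)
  next
    assume c: "0 \<le> lam \<and> K * s\<^sup>2 < wirtinger_constant \<theta>"
    have "(y has_vector_derivative y1 x) (at x within {-s..s})" if "x \<in> {-s..s}" for x
      by (rule absolutely_continuous_has_vector_derivative_within[OF acy N cy1 d0 that])
    then have "wirtinger_constant \<theta> * Y \<le> s\<^sup>2 * D"
      unfolding Y_def D_def by (rule wirtinger_twisted[OF s _ cy1 bc0])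
    also have "\<dots> \<le> s\<^sup>2 * ((K - lam) * Y)" using E by (intro mult_left_mono) (auto simp: algebra_simps)
    also have "\<dots> \<le> s\<^sup>2 * (K * Y)" using c Y0 by (intro mult_left_mono) (auto simp: algebra_simps)
    finally have "(wirtinger_constant \<theta> - K * s\<^sup>2) * Y \<le> 0" by (simp add: algebra_simps)
    then show "Y \<le> 0" using c by (simp add: mult_le_0_iff)
  qed
  then have "(norm (y x))\<^sup>2 = 0"
    using continuous_nonneg_integral_le_0_imp_0[OF _ cY _ _ x] s unfolding Y_def by simp
  then show ?thesis by simp
qed


section \<open>The first order system\<close>

lemma sum_UNIV_block_index:
  fixes f :: "((bool \<times> 'n::finite) \<times> bool) \<Rightarrow> 'a::comm_monoid_add"
  shows "(\<Sum>k\<in>UNIV. f k) = (\<Sum>j\<in>UNIV. f ((False,j),False) + f ((False,j),True) + f ((True,j),False) + f ((True,j),True))"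
proof -
  have "(\<Sum>k\<in>UNIV. f k) = (\<Sum>k\<in>(UNIV::(bool\<times>'n) set) \<times> (UNIV::bool set). f k)"
    by (simp add: UNIV_Times_UNIV)
  also have "\<dots> = (\<Sum>q\<in>(UNIV::(bool\<times>'n) set). \<Sum>b\<in>UNIV. f (q,b))"
    by (subst sum.cartesian_product) simp
  also have "\<dots> = (\<Sum>q\<in>(UNIV::(bool\<times>'n) set). f (q,False) + f (q,True))"
    by (simp add: UNIV_bool)
  also have "\<dots> = (\<Sum>q\<in>(UNIV::bool set) \<times> (UNIV::'n set). f (q,False) + f (q,True))"
    by (simp add: UNIV_Times_UNIV)
  also have "\<dots> = (\<Sum>r\<in>(UNIV::bool set). \<Sum>j\<in>UNIV. f ((r,j),False) + f ((r,j),True))"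
    by (subst sum.cartesian_product) simp
  also have "\<dots> = (\<Sum>j\<in>UNIV. f ((False,j),False) + f ((False,j),True) + f ((True,j),False) + f ((True,j),True))"
    by (simp add: UNIV_bool sum.distrib add_ac)
  finally show ?thesis .
qed

text \<open>Block \<open>r\<close> of a vector in \<open>\<real>\<^sup>4\<^sup>n\<close> read as a vector in \<open>\<complex>\<^sup>n\<close>, the index \<open>a\<close> of
  \<open>V \<otimes> I\<^sub>2\<close> giving real and imaginary part. Under this identification \<open>\<bold>p' = A \<bold>p\<close> becomes
  \<open>y'' = (\<lambda> - V) y\<close> and \<open>\<bold>w' = B \<bold>w\<close> becomes \<open>z' = i\<theta>/(2s) z\<close>.\<close>

definition complex_block :: "bool \<Rightarrow> real^((bool\<times>'n::finite)\<times>bool) \<Rightarrow> complex^'n" where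
  "complex_block r v = (\<chi> i. Complex (v $ ((r,i),False)) (v $ ((r,i),True)))"

lemma complex_block_nth: "complex_block r v $ i = Complex (v $ ((r,i),False)) (v $ ((r,i),True))"
  by (simp add: complex_block_def)

lemma bounded_linear_complex_block: "bounded_linear (complex_block r)"
proof -
  have "linear (complex_block r)"
    by (rule linearI) (simp_all add: vec_eq_iff complex_block_nth complex_eq_iff)
  then show ?thesis by (simp add: linear_conv_bounded_linear)
qed

lemma complex_block_eq_0:
  assumes "complex_block False v = 0" "complex_block True v = 0"
  shows "v = 0"
proof -
  have "v $ k = 0" for k
  proof -
    obtain r i a where k: "k = ((r,i),a)" by (metis surj_pair)
    have "complex_block r v $ i = 0" using assms by (cases r) auto
    then show ?thesis unfolding k by (cases a) (simp_all add: complex_block_nth complex_eq_iff)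
  qed
  then show ?thesis by (simp add: vec_eq_iff)
qed

lemma if_0_mult:
  "(if P then 1 else 0) * (x::'a::semiring_1) = (if P then x else 0)"
  "x * (if P then y else 0) = (if P then x * y else 0)"
  "(if P then y else 0) * x = (if P then y * x else 0)"
  by simp_all

lemma complex_block_Amat_position:
  "complex_block False (Amat V x lam *v p) = complex_block True p"
  by (simp add: vec_eq_iff complex_block_nth matrix_vector_mult_def sum_UNIV_block_index Amat_def Let_def
      if_0_mult)

lemma complex_block_Amat_derivative:
  "complex_block True (Amat V x lam *v p)
     = complex_of_real lam *s complex_block False p - complexify (V x) *v complex_block False p"
  by (simp add: vec_eq_iff complex_block_nth matrix_vector_mult_def sum_UNIV_block_index Amat_def Let_def
      kronI2_def complexify_def complex_eq_iff Re_sum Im_sum sum_subtractf left_diff_distrib if_0_mult)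

lemma complex_block_Bmat:
  "complex_block r (Bmat s \<theta> *v w) = (\<i> * complex_of_real (\<theta> / (2 * s))) *s complex_block r w"
  by (cases r) (simp_all add: vec_eq_iff complex_block_nth matrix_vector_mult_def sum_UNIV_block_index
      Bmat_def umat_def complex_eq_iff sum.distrib if_0_mult)

lemma absolutely_continuous_linear_ode:
  fixes c :: "real \<Rightarrow> complex"
  assumes ac: "absolutely_continuous_on c {a..b}" and ab: "a \<le> b" and N: "negligible N"
    and der: "\<And>x. x \<in> {a..b} - N \<Longrightarrow> (c has_vector_derivative k * c x) (at x)"
  shows "c b = exp ((b - a) *\<^sub>R k) * c a"
proof -
  define e where "e t = exp (t *\<^sub>R (- k))" for t
  have de: "(e has_vector_derivative e t * (- k)) (at t within S)" for t S
    unfolding e_def by (rule exp_scaleR_has_vector_derivative_right)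
  have "absolutely_continuous_on e {a..b}"
    by (rule has_vector_derivative_continuous_imp_absolutely_continuous_on[OF de])
       (auto simp: e_def intro!: continuous_intros)
  then have ac_ec: "absolutely_continuous_on (\<lambda>x. e x * c x) {a..b}"
    by (rule absolutely_continuous_on_bilinear[OF bounded_bilinear_mult _ ac])
  have "(\<lambda>x. e x * c x) b - (\<lambda>x. e x * c x) a = integral {a..b} (\<lambda>x. 0)"
  proof (rule absolutely_continuous_ftc[OF ac_ec ab N])
    fix x assume x: "x \<in> {a..b} - N"
    have "((\<lambda>x. e x * c x) has_vector_derivative e x * (k * c x) + e x * (- k) * c x) (at x)"
      using has_vector_derivative_mult[OF de der[OF x]] by (simp add: algebra_simps)
    then show "((\<lambda>x. e x * c x) has_vector_derivative 0) (at x)" by (simp add: algebra_simps)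
  qed simp
  then have eq: "e b * c b = e a * c a" by simp
  have "exp (b *\<^sub>R k) * e b = 1" unfolding e_def by (simp add: exp_add[symmetric])
  moreover have "exp (b *\<^sub>R k) * e a = exp ((b - a) *\<^sub>R k)"
    unfolding e_def by (simp add: exp_add[symmetric] scaleR_diff_left)
  ultimately show ?thesis using eq by (metis mult.assoc mult_1)
qed

lemma complex_block_rotation:
  fixes w :: "real \<Rightarrow> real^((bool\<times>'n::finite)\<times>bool)"
  assumes s: "0 < s" "s \<le> L" and acw: "absolutely_continuous_on w {-L..L}" and N: "negligible N"
    and dw: "\<And>x. x \<in> {-L..L} - N \<Longrightarrow> (w has_vector_derivative (Bmat s \<theta> *v w x)) (at x)"
  shows "complex_block r (w s) = exp (\<i> * complex_of_real \<theta>) *s complex_block r (w (-s))"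
proof -
  have sub: "{-s..s} \<subseteq> {-L..L}" using s by auto
  have "complex_block r (w s) $ i = exp (\<i> * complex_of_real \<theta>) * complex_block r (w (-s)) $ i" for i
  proof -
    have "(\<lambda>x. complex_block r (w x) $ i) s
        = exp ((s - -s) *\<^sub>R (\<i> * complex_of_real (\<theta> / (2 * s)))) * (\<lambda>x. complex_block r (w x) $ i) (-s)"
    proof (rule absolutely_continuous_linear_ode[OF _ _ N])
      show "absolutely_continuous_on (\<lambda>x. complex_block r (w x) $ i) {-s..s}"
        by (intro absolutely_continuous_on_linear[OF bounded_linear_vec_nth]
            absolutely_continuous_on_linear[OF bounded_linear_complex_block]
            absolutely_continuous_on_subset[OF acw sub])
      fix x assume "x \<in> {-s..s} - N"
      then have "x \<in> {-L..L} - N" using sub by auto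
      from bounded_linear.has_vector_derivative[OF bounded_linear_vec_nth
          bounded_linear.has_vector_derivative[OF bounded_linear_complex_block dw[OF this]]]
      show "((\<lambda>x. complex_block r (w x) $ i) has_vector_derivative
              \<i> * complex_of_real (\<theta> / (2 * s)) * complex_block r (w x) $ i) (at x)"
        by (simp add: complex_block_Bmat)
    qed (use s in simp)
    moreover have "(s - -s) *\<^sub>R (\<i> * complex_of_real (\<theta> / (2 * s))) = \<i> * complex_of_real \<theta>"
      using s by (simp add: scaleR_conv_of_real field_simps)
    ultimately show ?thesis by simp
  qed
  then show ?thesis by (simp add: vec_eq_iff)
qed

lemma has_vector_derivative_within_of_vanishing:
  fixes f :: "real \<Rightarrow> 'a::real_normed_vector"
  assumes ab: "a < b" and x: "x \<in> {a..b}" and f: "\<And>y. y \<in> {a..b} \<Longrightarrow> f y = 0"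
    and der: "(f has_vector_derivative f') (at x within {a..b})"
  shows "f' = 0"
proof -
  have "(f has_vector_derivative 0) (at x within {a..b})"
    by (rule has_vector_derivative_transform_within[where d=1 and f="\<lambda>x. 0"]) (use x f in auto)
  then show ?thesis
    using vector_derivative_unique_within_closed_interval[of a b x f f' 0] ab x der by simp
qed

lemma Ysol_complex_blocks:
  fixes V :: "real \<Rightarrow> real^'n^'n"
  assumes s: "0 < s" "s \<le> L" and pw: "(p, w) \<in> Ysol V L \<theta> s lam"
  defines "y \<equiv> \<lambda>x. complex_block False (p x)" and "y1 \<equiv> \<lambda>x. complex_block True (p x)"
  obtains N where "negligible N"
    "absolutely_continuous_on y {-s..s}" "absolutely_continuous_on y1 {-s..s}"
    "\<And>x. x \<in> {-s..s} - N \<Longrightarrow> (y has_vector_derivative y1 x) (at x)"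
    "\<And>x. x \<in> {-s..s} - N \<Longrightarrow>
       (y1 has_vector_derivative (complex_of_real lam *s y x - complexify (V x) *v y x)) (at x)"
    "\<And>r. complex_block r (w s) = exp (\<i> * complex_of_real \<theta>) *s complex_block r (w (-s))"
proof -
  have acp: "absolutely_continuous_on p {-L..L}" and acw: "absolutely_continuous_on w {-L..L}"
    and aep: "AE x in lebesgue. x \<in> {-L..L} \<longrightarrow> (p has_vector_derivative (Amat V x lam *v p x)) (at x)"
    and aew: "AE x in lebesgue. x \<in> {-L..L} \<longrightarrow> (w has_vector_derivative (Bmat s \<theta> *v w x)) (at x)"
    using pw unfolding Ysol_def by auto
  obtain N1 where N1: "negligible N1"
    "\<And>x. x \<notin> N1 \<Longrightarrow> x \<in> {-L..L} \<longrightarrow> (p has_vector_derivative (Amat V x lam *v p x)) (at x)"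
    using AE_lebesgue_obtain_negligible[OF aep] by blast
  obtain N2 where N2: "negligible N2"
    "\<And>x. x \<notin> N2 \<Longrightarrow> x \<in> {-L..L} \<longrightarrow> (w has_vector_derivative (Bmat s \<theta> *v w x)) (at x)"
    using AE_lebesgue_obtain_negligible[OF aew] by blast
  have sub: "{-s..s} \<subseteq> {-L..L}" using s by auto
  have dp: "(p has_vector_derivative (Amat V x lam *v p x)) (at x)" if "x \<in> {-s..s} - N1" for x
    using N1(2)[of x] that sub by auto
  show ?thesis
  proof (rule that[OF N1(1)])
    show "absolutely_continuous_on y {-s..s}" "absolutely_continuous_on y1 {-s..s}"
      unfolding y_def y1_def
      by (intro absolutely_continuous_on_linear[OF bounded_linear_complex_block]
          absolutely_continuous_on_subset[OF acp sub])+
    show "(y has_vector_derivative y1 x) (at x)" if "x \<in> {-s..s} - N1" for x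
      using bounded_linear.has_vector_derivative[OF bounded_linear_complex_block dp[OF that], of False]
      unfolding y_def y1_def complex_block_Amat_position .
    show "(y1 has_vector_derivative (complex_of_real lam *s y x - complexify (V x) *v y x)) (at x)"
      if "x \<in> {-s..s} - N1" for x
      using bounded_linear.has_vector_derivative[OF bounded_linear_complex_block dp[OF that], of True]
      unfolding y_def y1_def complex_block_Amat_derivative .
    show "complex_block r (w s) = exp (\<i> * complex_of_real \<theta>) *s complex_block r (w (-s))" for r
      using N2(2) by (intro complex_block_rotation[OF s acw N2(1)]) auto
  qed
qed

lemma Ysol_crossing_vanishes:
  fixes V :: "real \<Rightarrow> real^'n^'n"
  assumes s: "0 < s" "s \<le> L"
    and V_pc: "\<And>i j. piecewise_continuous (\<lambda>x. V x $ i $ j)"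
    and pw: "(p, w) \<in> Ysol V L \<theta> s lam"
    and X: "p (-s) = w (-s)" "p s = w s"
    and cond: "Vnorm_inf V L < lam \<or> (0 \<le> lam \<and> Vnorm_inf V L * s\<^sup>2 < wirtinger_constant \<theta>)"
  shows "p (-s) = 0 \<and> p s = 0"
proof -
  define y where "y x = complex_block False (p x)" for x
  define y1 where "y1 x = complex_block True (p x)" for x
  obtain N where N: "negligible N" and acy: "absolutely_continuous_on y {-s..s}"
    and acy1: "absolutely_continuous_on y1 {-s..s}"
    and d0: "\<And>x. x \<in> {-s..s} - N \<Longrightarrow> (y has_vector_derivative y1 x) (at x)"
    and d1: "\<And>x. x \<in> {-s..s} - N \<Longrightarrow>
       (y1 has_vector_derivative (complex_of_real lam *s y x - complexify (V x) *v y x)) (at x)"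
    and rot: "\<And>r. complex_block r (w s) = exp (\<i> * complex_of_real \<theta>) *s complex_block r (w (-s))"
    using Ysol_complex_blocks[OF s pw] unfolding y_def[abs_def] y1_def[abs_def] by metis
  have bc: "y s = exp (\<i> * complex_of_real \<theta>) *s y (-s)" "y1 s = exp (\<i> * complex_of_real \<theta>) *s y1 (-s)"
    unfolding y_def y1_def X by (rule rot)+
  have bnd: "inner (complexify (V x) *v v) v \<le> Vnorm_inf V L * inner v v" if "x \<in> {-s..s}" for x v
    using quadratic_form_le_Vnorm_inf[OF V_pc] that s by auto
  have z: "y x = 0" if "x \<in> {-s..s}" for x
    by (rule twisted_solution_vanishes[OF s(1) acy acy1 N d0 d1 bnd bc cond that])
  have z1: "y1 x = 0" if "x \<in> {-s..s}" for x
    using has_vector_derivative_within_of_vanishing[OF _ that z absolutely_continuous_has_vector_derivative_within[OF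
          acy N absolutely_continuous_imp_continuous_on[OF acy1] d0 that]] s by simp
  show ?thesis
    using z z1 s complex_block_eq_0[of "p (-s)"] complex_block_eq_0[of "p s"] by (auto simp: y_def y1_def)
qed

lemma not_is_eigenvalue_H:
  fixes V :: "real \<Rightarrow> real^'n^'n"
  assumes s: "0 < s" "s \<le> L"
    and V_pc: "\<And>i j. piecewise_continuous (\<lambda>x. V x $ i $ j)"
    and cond: "Vnorm_inf V L < lam \<or> (0 \<le> lam \<and> Vnorm_inf V L * s\<^sup>2 < wirtinger_constant \<theta>)"
  shows "\<not> is_eigenvalue_H V \<theta> s (complex_of_real lam)"
proof
  assume "is_eigenvalue_H V \<theta> s (complex_of_real lam)"
  then obtain y :: "real \<Rightarrow> complex^'n" and y1 y2 where
    acy: "absolutely_continuous_on y {-s..s}" and acy1: "absolutely_continuous_on y1 {-s..s}"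
    and a0: "AE x in lebesgue. x \<in> {-s..s} \<longrightarrow> (y has_vector_derivative y1 x) (at x)"
    and a1: "AE x in lebesgue. x \<in> {-s..s} \<longrightarrow> (y1 has_vector_derivative y2 x) (at x)"
    and bc0: "y s = exp (\<i> * complex_of_real \<theta>) *s y (-s)"
    and bc1: "y1 s = exp (\<i> * complex_of_real \<theta>) *s y1 (-s)"
    and a2: "AE x in lebesgue. x \<in> {-s..s} \<longrightarrow> y2 x + complexify (V x) *v y x = complex_of_real lam *s y x"
    and nz: "\<exists>x\<in>{-s..s}. y x \<noteq> 0"
    unfolding is_eigenvalue_H_def by blast
  have "AE x in lebesgue. x \<in> {-s..s} \<longrightarrow> (y has_vector_derivative y1 x) (at x) \<and>
      (y1 has_vector_derivative (complex_of_real lam *s y x - complexify (V x) *v y x)) (at x)"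
    using a0 a1 a2 by eventually_elim (metis add_diff_cancel_right')
  then obtain N where N: "negligible N" and
    d: "\<And>x. x \<in> {-s..s} - N \<Longrightarrow> (y has_vector_derivative y1 x) (at x) \<and>
      (y1 has_vector_derivative (complex_of_real lam *s y x - complexify (V x) *v y x)) (at x)"
    by (rule AE_lebesgue_obtain_negligible) blast
  have bnd: "inner (complexify (V x) *v v) v \<le> Vnorm_inf V L * inner v v" if "x \<in> {-s..s}" for x v
    using quadratic_form_le_Vnorm_inf[OF V_pc] that s by auto
  have "y x = 0" if "x \<in> {-s..s}" for x
    using d by (intro twisted_solution_vanishes[OF s(1) acy acy1 N _ _ bnd bc0 bc1 cond that]) blast+
  then show False using nz by blast
qed

lemma zero_in_Ysol: "(\<lambda>x. 0, \<lambda>x. 0) \<in> Ysol V L \<theta> s lam"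
  unfolding Ysol_def
  by (auto intro!: AE_I2 lipschitz_on_imp_absolutely_continuous_on[where B=0] lipschitz_on_constant)

text \<open>The zero solution always lies in the intersection, so \<open>\<noteq> {0}\<close> means a nonzero solution
  with boundary data in \<open>X \<times> X\<close>.\<close>

lemma not_is_crossingI:
  fixes V :: "real \<Rightarrow> real^'n^'n"
  assumes "\<And>p w. (p, w) \<in> Ysol V L \<theta> s lam \<Longrightarrow> p (-s) = w (-s) \<Longrightarrow> p s = w s \<Longrightarrow> p (-s) = 0 \<and> p s = 0"
  shows "\<not> is_crossing V L \<theta> s lam"
proof -
  have "(Phi s ` Ysol V L \<theta> s lam) \<inter> (Xset \<times> Xset) \<subseteq> {0}"
    using assms by (force simp: Phi_def Xset_def zero_prod_def)
  moreover have "0 \<in> (Phi s ` Ysol V L \<theta> s lam) \<inter> (Xset \<times> Xset)"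
    using zero_in_Ysol by (force simp: Phi_def Xset_def zero_prod_def)
  ultimately show ?thesis unfolding is_crossing_def by blast
qed

theorem lemma3p12:
  fixes V :: "real \<Rightarrow> real^'n^'n" and L :: real
  assumes L_pos: "L > 0"
    and V_sym: "\<And>x. transpose (V x) = V x"
    and V_per: "\<And>x. V (x + 2 * L) = V x"
    and V_pc: "\<And>i j. piecewise_continuous (\<lambda>x. V x $ i $ j)"
  shows
    "(\<forall>\<theta> lam_inf. \<theta> \<in> {0..2*pi} \<and> lam_inf > Vnorm_inf V L \<longrightarrow>
        (\<forall>s\<in>{0<..L}. \<not> is_eigenvalue_H V \<theta> s (complex_of_real lam_inf)) \<and>
        (\<forall>s0\<in>{0<..<L}. \<forall>s\<in>{s0..L}. \<not> is_crossing V L \<theta> s lam_inf))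
     \<and>
     (\<forall>\<theta> lam_inf s0. \<theta> \<in> {0<..<2*pi} \<and> lam_inf > Vnorm_inf V L \<and> s0 \<in> {0<..<L} \<and>
        s0 < (1/2) * min \<theta> (2*pi - \<theta>) / sqrt (Vnorm_inf V L + lam_inf) \<longrightarrow>
        (\<forall>lam\<in>{0..lam_inf}. \<not> is_eigenvalue_H V \<theta> s0 (complex_of_real lam)) \<and>
        (\<forall>lam\<in>{0..lam_inf}. \<not> is_crossing V L \<theta> s0 lam))"
proof (intro conjI allI impI ballI)
  fix \<theta> lam_inf s0 s
  assume A: "\<theta> \<in> {0..2*pi} \<and> lam_inf > Vnorm_inf V L"
  then show "\<not> is_eigenvalue_H V \<theta> s (complex_of_real lam_inf)" if "s \<in> {0<..L}"
    using that by (intro not_is_eigenvalue_H[OF _ _ V_pc]) auto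
  show "\<not> is_crossing V L \<theta> s lam_inf" if "s0 \<in> {0<..<L}" "s \<in> {s0..L}"
    using A that by (intro not_is_crossingI Ysol_crossing_vanishes[OF _ _ V_pc]) auto
next
  fix \<theta> lam_inf s0 lam
  assume A: "\<theta> \<in> {0<..<2*pi} \<and> lam_inf > Vnorm_inf V L \<and> s0 \<in> {0<..<L} \<and>
        s0 < (1/2) * min \<theta> (2*pi - \<theta>) / sqrt (Vnorm_inf V L + lam_inf)" and lam: "lam \<in> {0..lam_inf}"
  have "Vnorm_inf V L * s0\<^sup>2 < wirtinger_constant \<theta>"
    using A Vnorm_inf_nonneg[OF V_pc L_pos] by (intro small_half_length_imp_wirtinger_constant) auto
  then have cond: "Vnorm_inf V L < lam \<or> (0 \<le> lam \<and> Vnorm_inf V L * s0\<^sup>2 < wirtinger_constant \<theta>)"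
    using lam by simp
  show "\<not> is_eigenvalue_H V \<theta> s0 (complex_of_real lam)"
    using A by (intro not_is_eigenvalue_H[OF _ _ V_pc cond]) auto
  show "\<not> is_crossing V L \<theta> s0 lam"
    using A by (intro not_is_crossingI Ysol_crossing_vanishes[OF _ _ V_pc _ _ _ cond]) auto
qed

end
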